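(* Let $0<\nu<1$, $0\le\mu<1$ and $\lambda>0$. Then for every $t>0$, $$\int_\lambda^\infty e^{-(u-\lambda)}\,K_{\nu,\mu}(t,u)\,du=\lambda^{(\nu+\mu-2)/\nu}\int_0^t E_\nu\big(-(t-x)^{\nu}\big)\,f_{\nu,\nu+\mu-1}\!\left(\frac{x}{\lambda^{1/\nu}}\right)dx .$$
   Context: For $0<\nu<1$ and real $\rho$, $f_{\nu,\rho}(t)=\frac{1}{2\pi i}\int_{c-i\infty}^{c+i\infty}e^{st}s^{-\rho}e^{-s^{\nu}}\,ds$ ($t>0$, $c>0$, principal branches), the inverse Laplace transform of $s^{-\rho}e^{-s^\nu}$. For $\mu\ge0$, $u>0$, $K_{\nu,\mu}(t,u)$ is the inverse Laplace transform in $t$ of $s^{-\mu}e^{-us^\nu}$. $E_\nu(z)=\sum_{k\ge0}z^k/\Gamma(k\nu+1)$ is the Mittag-Leffler function. *)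

theory Defs
  imports "HOL-Analysis.Analysis"
begin

text \<open>Bromwich inversion integral along the vertical line Re s = c, parametrised
  by s = c + i y (so ds = i dy and 1/(2 pi i) ds = 1/(2 pi) dy).
  Principal branches: complex powr is exp (a * Ln z).\<close>
definition bromwich :: "real \<Rightarrow> (complex \<Rightarrow> complex) \<Rightarrow> real \<Rightarrow> complex" where
  "bromwich c F t = (1 / (2 * pi)) *
     integral UNIV (\<lambda>y::real. exp (Complex c y * of_real t) * F (Complex c y))"

definition f_fun :: "real \<Rightarrow> real \<Rightarrow> real \<Rightarrow> complex" where
  "f_fun \<nu> \<rho> t = bromwich 1 (\<lambda>s. s powr (- of_real \<rho>) * exp (- (s powr of_real \<nu>))) t"

definition K_fun :: "real \<Rightarrow> real \<Rightarrow> real \<Rightarrow> real \<Rightarrow> complex" where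
  "K_fun \<nu> \<mu> t u = bromwich 1 (\<lambda>s. s powr (- of_real \<mu>) * exp (- of_real u * (s powr of_real \<nu>))) t"

definition mittag_leffler :: "real \<Rightarrow> real \<Rightarrow> real" where
  "mittag_leffler \<nu> z = (\<Sum>k. z ^ k / Gamma (real k * \<nu> + 1))"

end

theory Submission
  imports Defs "HOL-Complex_Analysis.Complex_Analysis" "HOL-Probability.Sinc_Integral"
    "HOL-Real_Asymp.Real_Asymp"
begin

text \<open>
  Both sides are inverse Laplace transforms, written as Bromwich integrals.
  On the left, Fubini's theorem and
  int_lam^oo e^-(u - lam) e^-(u w) du = e^-(lam w) / (1 + w), with w = s^nu,
  identify the integral as the inverse transform of H(s) = s^-mu e^-(lam s^nu) / (1 + s^nu).
  On the right, the substitution y = a y' with a = lam^(1/nu) shows that x |-> f(x / a) is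
  the inverse transform of a^(1 - rho) s^-rho e^-(lam s^nu), where rho = nu + mu - 1.
  Expanding E_nu termwise, convolution with (t - x)^(k nu) multiplies a transform by
  Gamma(k nu + 1) s^-(k nu + 1), and the geometric series
  sum_k (-1)^k s^-(k nu + 1) = 1 / (s (1 + s^-nu)) turns the transform into a^(1 - rho) H(s).

  The analytic input is the bound Re s^nu >= cos(pi nu / 2) |s|^nu for Re s > 0: it gives all
  transforms occurring here stretched-exponential decay along vertical lines, so their
  Bromwich integrals converge absolutely, do not depend on the abscissa (Cauchy's theorem on
  rectangles) and vanish for negative times.
\<close>

section \<open>Powers in the right half-plane\<close>

lemma Re_powr_ge_cos_mult_norm_powr:
  fixes s :: complex and \<nu> :: real
  assumes "0 < Re s" "0 < \<nu>" "\<nu> \<le> 1"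
  shows "cos (pi * \<nu> / 2) * norm s powr \<nu> \<le> Re (s powr of_real \<nu>)"
proof -
  have s0: "s \<noteq> 0" using assms by auto
  have arg: "\<bar>Im (Ln s)\<bar> < pi / 2" using Re_Ln_pos_lt_imp assms by blast
  have "Re (s powr of_real \<nu>) = exp (\<nu> * Re (Ln s)) * cos (\<nu> * Im (Ln s))"
    using s0 by (simp add: powr_def Re_exp)
  also have "exp (\<nu> * Re (Ln s)) = norm s powr \<nu>" using s0 by (simp add: powr_def Re_Ln)
  finally have eq: "Re (s powr of_real \<nu>) = norm s powr \<nu> * cos (\<nu> * Im (Ln s))" .
  have "cos (pi * \<nu> / 2) \<le> cos \<bar>\<nu> * Im (Ln s)\<bar>"
  proof (rule cos_monotone_0_pi_le)
    have "\<bar>\<nu> * Im (Ln s)\<bar> = \<nu> * \<bar>Im (Ln s)\<bar>" using assms by (simp add: abs_mult)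
    also have "\<dots> \<le> \<nu> * (pi / 2)" using arg assms by (intro mult_left_mono) auto
    finally show "\<bar>\<nu> * Im (Ln s)\<bar> \<le> pi * \<nu> / 2" by (simp add: mult.commute)
    show "pi * \<nu> / 2 \<le> pi" using assms pi_gt_zero by (simp add: field_simps)
  qed simp
  thus ?thesis unfolding eq by (simp add: mult.commute mult_left_mono)
qed

lemma cos_half_pi_mult_pos: "0 < \<nu> \<Longrightarrow> \<nu> < 1 \<Longrightarrow> 0 < cos (pi * \<nu> / 2)"
  by (intro cos_gt_zero) (auto simp: field_simps)

lemma Re_powr_nonneg:
  assumes "0 < Re s" "0 < \<nu>" "\<nu> \<le> 1"
  shows "0 \<le> Re (s powr of_real \<nu>)"
proof -
  have "0 \<le> pi * \<nu>" using assms by simp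
  hence "- (pi / 2) \<le> pi * \<nu> / 2" using pi_gt_zero by linarith
  moreover have "pi * \<nu> / 2 \<le> pi / 2" using assms by simp
  ultimately have "0 \<le> cos (pi * \<nu> / 2)" by (intro cos_ge_zero)
  thus ?thesis using Re_powr_ge_cos_mult_norm_powr[OF assms] by (smt (verit) powr_ge_zero mult_nonneg_nonneg)
qed

lemma norm_one_plus_powr_ge_one:
  assumes "0 < Re s" "0 < \<nu>" "\<nu> \<le> 1"
  shows "1 \<le> norm (1 + s powr of_real \<nu>)"
proof -
  have "1 \<le> Re (1 + s powr of_real \<nu>)" using Re_powr_nonneg[OF assms] by simp
  also have "\<dots> \<le> norm (1 + s powr of_real \<nu>)" by (rule complex_Re_le_cmod)
  finally show ?thesis .
qed

lemma norm_exp_neg_mult_powr_le: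
  fixes s :: complex and \<nu> b :: real
  assumes "0 < Re s" "0 < \<nu>" "\<nu> \<le> 1" "0 \<le> b"
  shows "norm (exp (- of_real b * s powr of_real \<nu>)) \<le> exp (- b * cos (pi * \<nu> / 2) * norm s powr \<nu>)"
proof -
  have "norm (exp (- of_real b * s powr of_real \<nu>)) = exp (- b * Re (s powr of_real \<nu>))"
    by (simp add: norm_exp_eq_Re)
  also have "\<dots> \<le> exp (- b * cos (pi * \<nu> / 2) * norm s powr \<nu>)"
    using Re_powr_ge_cos_mult_norm_powr[OF assms(1-3)] assms(4) by (simp add: mult_left_mono mult.assoc)
  finally show ?thesis .
qed

lemma holomorphic_on_powr_right_half_plane: "(\<lambda>s. s powr a) holomorphic_on {s. 0 < Re s}"
  by (rule holomorphic_on_powr) (auto intro: holomorphic_intros simp: complex_nonpos_Reals_iff)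

lemma norm_powr_neg_le_power:
  fixes s :: complex
  assumes c: "1 \<le> c" "c \<le> norm s" and \<nu>: "0 \<le> \<nu>"
  shows "norm (s powr (- of_real (real k * \<nu> + 1))) \<le> (c powr (- \<nu>)) ^ k"
proof -
  have "norm (s powr (- of_real (real k * \<nu> + 1))) = norm s powr (- (real k * \<nu> + 1))"
    by (simp add: norm_powr_real_powr')
  also have "\<dots> \<le> norm s powr (- (real k * \<nu>))" using c by (intro powr_mono) auto
  also have "\<dots> \<le> c powr (- (real k * \<nu>))" using c \<nu> by (intro powr_mono2') auto
  also have "\<dots> = (c powr (- \<nu>)) ^ k" using c by (simp add: powr_power mult.commute)
  finally show ?thesis .
qed

lemma sums_powr_geometric:
  fixes s :: complex and \<nu> :: real
  assumes s: "1 < norm s" and \<nu>: "0 < \<nu>"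
  shows "(\<lambda>k. (-1) ^ k * s powr (- of_real (real k * \<nu> + 1))) sums (1 / (s * (1 + s powr (- of_real \<nu>))))"
proof -
  have s0: "s \<noteq> 0" using s by auto
  define q where "q = - (s powr (- of_real \<nu>))"
  have "norm q = norm s powr (- \<nu>)" unfolding q_def by (simp add: norm_powr_real_powr')
  also have "\<dots> < 1" using s \<nu> by (simp add: powr_less_one)
  finally have "(\<lambda>k. inverse s * q ^ k) sums (inverse s * (1 / (1 - q)))"
    by (intro sums_mult geometric_sums)
  moreover have "inverse s * q ^ k = (-1) ^ k * s powr (- of_real (real k * \<nu> + 1))" for k
  proof -
    have "s powr (- of_real (real k * \<nu> + 1)) = s powr (-1) * s powr (of_nat k * (- of_real \<nu>))"
      by (simp add: powr_add[symmetric] algebra_simps)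
    also have "\<dots> = inverse s * (s powr (- of_real \<nu>)) ^ k"
      using powr_power[OF s0, of "- of_real \<nu>" k] s0 by (simp add: powr_minus)
    finally have "s powr (- of_real (real k * \<nu> + 1)) = inverse s * (s powr (- of_real \<nu>)) ^ k" .
    moreover have "q ^ k = (-1) ^ k * (s powr (- of_real \<nu>)) ^ k" unfolding q_def by (rule power_minus)
    ultimately show ?thesis by (simp add: mult_ac)
  qed
  moreover have "inverse s * (1 / (1 - q)) = 1 / (s * (1 + s powr (- of_real \<nu>)))"
    unfolding q_def by (simp add: divide_inverse inverse_mult_distrib)
  ultimately show ?thesis by simp
qed

lemma powr_mult_div_one_plus_powr_neg:
  fixes s A E :: complex
  assumes s: "0 < Re s" and \<nu>: "0 < \<nu>" "\<nu> \<le> 1"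
  shows "A * (s powr (- of_real (\<nu> + \<mu> - 1)) * E) / (s * (1 + s powr (- of_real \<nu>)))
           = A * (s powr (- of_real \<mu>) * E / (1 + s powr of_real \<nu>))"
proof -
  define P where "P = s powr of_real \<nu>"
  have s0: "s \<noteq> 0" using s by auto
  have P: "P \<noteq> 0" "1 + P \<noteq> 0"
    using s0 norm_one_plus_powr_ge_one[OF s \<nu>] unfolding P_def by auto
  have "- of_real (\<nu> + \<mu> - 1) = (- of_real \<mu> + 1) + (- of_real \<nu> :: complex)" by simp
  hence "s powr (- of_real (\<nu> + \<mu> - 1)) = s powr (- of_real \<mu>) * s powr 1 * s powr (- of_real \<nu>)"
    by (simp only: powr_add)
  also have "\<dots> = s powr (- of_real \<mu>) * s * inverse P" using s0 by (simp add: P_def powr_minus)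
  finally have "s powr (- of_real (\<nu> + \<mu> - 1)) = s powr (- of_real \<mu>) * s * inverse P" .
  moreover have "s powr (- of_real \<nu>) = inverse P" unfolding P_def by (simp add: powr_minus)
  moreover have "A * (X * s * inverse P * E) / (s * (1 + inverse P)) = A * (X * E / (1 + P))" for X
  proof -
    have "s * (1 + P) \<noteq> 0" using s0 P by simp
    moreover have "s + P * s = s * (1 + P)" by (simp add: algebra_simps)
    ultimately have "s + P * s \<noteq> 0" by simp
    thus ?thesis using s0 P by (simp add: field_simps)
  qed
  ultimately show ?thesis unfolding P_def by simp
qed

section \<open>Integrability on the real line\<close>

lemma bounded_on_atLeast_if_tendsto_zero:
  fixes f :: "real \<Rightarrow> real"
  assumes "continuous_on {a..} f" "(f \<longlongrightarrow> 0) at_top"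
  obtains A where "\<And>x. x \<ge> a \<Longrightarrow> \<bar>f x\<bar> \<le> A"
proof -
  obtain N where N: "\<And>x. x \<ge> N \<Longrightarrow> \<bar>f x\<bar> < 1"
    using tendstoD[OF assms(2), of 1] by (auto simp: eventually_at_top_linorder)
  have "compact (f ` {a..max a N})"
    by (rule compact_continuous_image) (auto intro: continuous_on_subset[OF assms(1)])
  then obtain B where B: "\<And>y. y \<in> f ` {a..max a N} \<Longrightarrow> norm y \<le> B"
    using compact_imp_bounded bounded_iff by metis
  have "\<bar>f x\<bar> \<le> max 1 B" if "x \<ge> a" for x
  proof (cases "x \<le> max a N")
    case True thus ?thesis using B[of "f x"] that by force
  next
    case False thus ?thesis using N[of x] by (auto simp: max_def split: if_splits)
  qed
  thus ?thesis using that by blast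
qed

lemma set_integrable_lborel_if_nonneg_integrable_on:
  fixes f :: "real \<Rightarrow> real"
  assumes "f integrable_on A" "\<And>x. x \<in> A \<Longrightarrow> 0 \<le> f x" "A \<in> sets borel"
    "f \<in> borel_measurable borel"
  shows "set_integrable lborel A f"
proof -
  have "set_integrable lebesgue A f"
    using nonnegative_absolutely_integrable_1[OF assms(1,2)] by simp
  moreover have "(\<lambda>x. indicator A x *\<^sub>R f x) \<in> borel_measurable lborel"
    using assms(3,4) by measurable
  ultimately show ?thesis unfolding set_integrable_def using integrable_completion by blast
qed

lemma integrable_exp_neg_mult_abs_powr:
  fixes \<beta> \<nu> :: real
  assumes "0 < \<beta>" "0 < \<nu>"
  shows "integrable lborel (\<lambda>y. exp (- \<beta> * \<bar>y\<bar> powr \<nu>))"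
proof -
  have "continuous_on {0..} (\<lambda>x. (1 + x\<^sup>2) * exp (- \<beta> * x powr \<nu>))"
    using assms by (intro continuous_intros continuous_on_powr') auto
  moreover have "((\<lambda>x. (1 + x\<^sup>2) * exp (- \<beta> * x powr \<nu>)) \<longlongrightarrow> 0) at_top"
    using assms by real_asymp
  ultimately obtain A where A: "\<And>x. x \<ge> 0 \<Longrightarrow> \<bar>(1 + x\<^sup>2) * exp (- \<beta> * x powr \<nu>)\<bar> \<le> A"
    using bounded_on_atLeast_if_tendsto_zero by blast
  show ?thesis
  proof (rule Bochner_Integration.integrable_bound)
    show "integrable lborel (\<lambda>y. A * inverse (1 + y\<^sup>2))"
      using integrable_inverse_1_plus_square by (simp add: set_integrable_def)
    show "AE y in lborel. norm (exp (- \<beta> * \<bar>y\<bar> powr \<nu>)) \<le> norm (A * inverse (1 + y\<^sup>2))"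
    proof (intro AE_I2)
      fix y :: real
      have "(1 + y\<^sup>2) * exp (- \<beta> * \<bar>y\<bar> powr \<nu>) \<le> A" using A[of "\<bar>y\<bar>"] by simp
      moreover have "0 < 1 + y\<^sup>2" by (simp add: add_pos_nonneg)
      ultimately show "norm (exp (- \<beta> * \<bar>y\<bar> powr \<nu>)) \<le> norm (A * inverse (1 + y\<^sup>2))"
        by (simp add: field_simps abs_mult)
    qed
  qed measurable
qed

lemma integrable_exp_neg_diff:
  fixes lam :: real
  shows "integrable lborel (\<lambda>u. indicator {lam..} u * exp (- (u - lam)))"
proof -
  have "((\<lambda>u. exp lam * exp (- 1 * u)) has_integral exp lam * (exp (- 1 * lam) / 1)) {lam..}"
    by (intro has_integral_mult_right has_integral_exp_minus_to_infinity) simp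
  moreover have "exp lam * exp (- 1 * u) = exp (- (u - lam))" for u by (simp flip: exp_add)
  ultimately have "((\<lambda>u. exp (- (u - lam))) has_integral exp lam * (exp (- 1 * lam) / 1)) {lam..}"
    by simp
  hence "(\<lambda>u. exp (- (u - lam))) integrable_on {lam..}" by (rule has_integral_integrable)
  hence "set_integrable lborel {lam..} (\<lambda>u. exp (- (u - lam)))"
    by (rule set_integrable_lborel_if_nonneg_integrable_on) auto
  thus ?thesis unfolding set_integrable_def by simp
qed

lemma integrable_lborel_pair_mult:
  fixes f g :: "real \<Rightarrow> real"
  assumes f: "integrable lborel f" and g: "integrable lborel g"
  shows "integrable (lborel \<Otimes>\<^sub>M lborel) (\<lambda>(u, y). f u * g y)"
proof (rule lborel_pair.Fubini_integrable)
  show "(\<lambda>(u, y). f u * g y) \<in> borel_measurable (lborel \<Otimes>\<^sub>M lborel)"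
    using f g by measurable
  have "(LBINT y. norm (f u * g y)) = \<bar>f u\<bar> * (LBINT y. \<bar>g y\<bar>)" for u
    by (simp add: abs_mult)
  thus "integrable lborel (\<lambda>u. LBINT y. norm ((\<lambda>(u, y). f u * g y) (u, y)))"
    using f by simp
  show "AE u in lborel. integrable lborel (\<lambda>y. (\<lambda>(u, y). f u * g y) (u, y))"
    using g by simp
qed

lemma tendsto_integral_symmetric_interval:
  fixes f :: "real \<Rightarrow> 'a::euclidean_space"
  assumes "integrable lborel f"
  shows "((\<lambda>T. integral {-T..T} f) \<longlongrightarrow> integral UNIV f) at_top"
proof -
  have eq: "integral {-T..T} f = (LBINT y. indicator {-T..T} y *\<^sub>R f y)" for T
    using set_borel_integral_eq_integral(2)[of "{-T..T}" f] integrable_mult_indicator[OF _ assms, of "{-T..T}"]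
    by (simp add: set_integrable_def set_lebesgue_integral_def)
  have "((\<lambda>T. LBINT y. indicator {-T..T} y *\<^sub>R f y) \<longlongrightarrow> (LBINT y. f y)) at_top"
  proof (rule integral_dominated_convergence_at_top[where w = "\<lambda>y. norm (f y)"])
    show "AE y in lborel. ((\<lambda>T. indicator {-T..T} y *\<^sub>R f y) \<longlongrightarrow> f y) at_top"
    proof (intro AE_I2 tendsto_eventually)
      fix y :: real
      show "\<forall>\<^sub>F T in at_top. indicator {-T..T} y *\<^sub>R f y = f y"
        using eventually_ge_at_top[of "\<bar>y\<bar>"] by eventually_elim (auto simp: indicator_def)
    qed
    show "\<forall>\<^sub>F T in at_top. AE y in lborel. norm (indicator {-T..T} y *\<^sub>R f y) \<le> norm (f y)"
      by (intro always_eventually allI AE_I2) (auto simp: indicator_def)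
  qed (use assms in auto)
  thus ?thesis unfolding eq using integral_lborel[OF assms] by simp
qed

lemma tendsto_exp_neg_mult_powr_at_top:
  fixes \<beta> \<nu> :: real
  assumes "0 < \<beta>" "0 < \<nu>"
  shows "((\<lambda>T. exp (- \<beta> * T powr \<nu>)) \<longlongrightarrow> 0) at_top"
  using assms by real_asymp

lemma
  fixes f :: "nat \<Rightarrow> 'a \<Rightarrow> 'b::{banach, second_countable_topology}"
  assumes f: "\<And>k. integrable M (f k)" and h: "integrable M h" and a: "summable a"
    and bound: "\<And>k x. x \<in> space M \<Longrightarrow> norm (f k x) \<le> a k * h x"
  shows integrable_suminf_dominated: "integrable M (\<lambda>x. \<Sum>k. f k x)"
    and integral_suminf_dominated: "(\<integral>x. (\<Sum>k. f k x) \<partial>M) = (\<Sum>k. integral\<^sup>L M (f k))"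
    and summable_integral_dominated: "summable (\<lambda>k. integral\<^sup>L M (f k))"
proof -
  have "AE x in M. summable (\<lambda>k. norm (f k x))"
    using bound by (intro AE_I2 summable_comparison_test'[OF summable_mult2[OF a]]) auto
  moreover have "summable (\<lambda>k. \<integral>x. norm (f k x) \<partial>M)"
  proof (rule summable_comparison_test'[OF summable_mult2[OF a, of "\<integral>x. h x \<partial>M"]])
    fix k
    have "(\<integral>x. norm (f k x) \<partial>M) \<le> (\<integral>x. a k * h x \<partial>M)"
      using f h bound by (intro integral_mono) auto
    thus "norm (\<integral>x. norm (f k x) \<partial>M) \<le> a k * (\<integral>x. h x \<partial>M)" by simp
  qed
  ultimately show "integrable M (\<lambda>x. \<Sum>k. f k x)"
    and "(\<integral>x. (\<Sum>k. f k x) \<partial>M) = (\<Sum>k. integral\<^sup>L M (f k))"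
    and "summable (\<lambda>k. integral\<^sup>L M (f k))"
    using f by (auto intro: integrable_suminf integral_suminf summable_integral)
qed

section \<open>Bromwich integrals of admissible transforms\<close>

definition bromwich_admissible :: "real \<Rightarrow> (complex \<Rightarrow> complex) \<Rightarrow> bool" where
  "bromwich_admissible \<nu> F \<longleftrightarrow> F holomorphic_on {s. 0 < Re s} \<and>
     (\<exists>C p b. 0 < b \<and> (\<forall>s. 0 < Re s \<longrightarrow> norm (F s) \<le> C * norm s powr p * exp (- b * norm s powr \<nu>)))"

lemma bromwich_admissibleI:
  assumes "F holomorphic_on {s. 0 < Re s}" "0 < b"
    "\<And>s. 0 < Re s \<Longrightarrow> norm (F s) \<le> C * norm s powr p * exp (- b * norm s powr \<nu>)"
  shows "bromwich_admissible \<nu> F"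
  using assms unfolding bromwich_admissible_def by blast

lemma bromwich_admissibleE:
  assumes "bromwich_admissible \<nu> F"
  obtains C p b where "F holomorphic_on {s. 0 < Re s}" "0 < b"
    "\<And>s. 0 < Re s \<Longrightarrow> norm (F s) \<le> C * norm s powr p * exp (- b * norm s powr \<nu>)"
  using assms unfolding bromwich_admissible_def by blast

lemma bromwich_admissible_cmult:
  assumes "bromwich_admissible \<nu> F"
  shows "bromwich_admissible \<nu> (\<lambda>s. A * F s)"
proof -
  obtain C p b where hol: "F holomorphic_on {s. 0 < Re s}" and b: "0 < b"
    and bound: "\<And>s. 0 < Re s \<Longrightarrow> norm (F s) \<le> C * norm s powr p * exp (- b * norm s powr \<nu>)"
    using assms by (rule bromwich_admissibleE) blast
  have "norm (A * F s) \<le> (norm A * C) * norm s powr p * exp (- b * norm s powr \<nu>)" if "0 < Re s" for s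
    using bound[OF that] by (simp add: norm_mult mult.assoc mult_left_mono)
  with hol b show ?thesis by (intro bromwich_admissibleI) (auto intro: holomorphic_intros)
qed

lemma bromwich_admissible_mult_powr:
  assumes "bromwich_admissible \<nu> F"
  shows "bromwich_admissible \<nu> (\<lambda>s. s powr (- of_real q) * F s)"
proof -
  obtain C p b where hol: "F holomorphic_on {s. 0 < Re s}" and b: "0 < b"
    and bound: "\<And>s. 0 < Re s \<Longrightarrow> norm (F s) \<le> C * norm s powr p * exp (- b * norm s powr \<nu>)"
    using assms by (rule bromwich_admissibleE) blast
  have "norm (s powr (- of_real q) * F s) \<le> C * norm s powr (p - q) * exp (- b * norm s powr \<nu>)"
    if s: "0 < Re s" for s
  proof -
    have "norm (s powr (- of_real q) * F s) = norm s powr (- q) * norm (F s)"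
      by (simp add: norm_mult norm_powr_real_powr')
    also have "\<dots> \<le> norm s powr (- q) * (C * norm s powr p * exp (- b * norm s powr \<nu>))"
      using bound[OF s] by (intro mult_left_mono) auto
    also have "\<dots> = C * norm s powr (p - q) * exp (- b * norm s powr \<nu>)"
      using s by (auto simp: powr_diff powr_minus field_simps)
    finally show ?thesis .
  qed
  moreover have "(\<lambda>s. s powr (- of_real q) * F s) holomorphic_on {s. 0 < Re s}"
    using holomorphic_on_powr_right_half_plane hol by (rule holomorphic_on_mult)
  ultimately show ?thesis using b by (intro bromwich_admissibleI)
qed

lemma bromwich_admissible_powr_mult_exp:
  assumes "0 < \<nu>" "\<nu> < 1" "0 < b"
  shows "bromwich_admissible \<nu> (\<lambda>s. s powr (- of_real \<rho>) * exp (- of_real b * s powr of_real \<nu>))"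
proof (rule bromwich_admissible_mult_powr, rule bromwich_admissibleI)
  show "(\<lambda>s. exp (- of_real b * s powr of_real \<nu>)) holomorphic_on {s. 0 < Re s}"
    by (intro holomorphic_intros holomorphic_on_powr_right_half_plane)
  show "0 < b * cos (pi * \<nu> / 2)" using assms cos_half_pi_mult_pos by simp
  show "norm (exp (- of_real b * s powr of_real \<nu>)) \<le> 1 * norm s powr 0 * exp (- (b * cos (pi * \<nu> / 2)) * norm s powr \<nu>)"
    if "0 < Re s" for s
    using norm_exp_neg_mult_powr_le[OF that, of \<nu> b] assms that by auto
qed

lemma bromwich_admissible_divide_one_plus_powr:
  assumes "bromwich_admissible \<nu> F" "0 < \<nu>" "\<nu> \<le> 1"
  shows "bromwich_admissible \<nu> (\<lambda>s. F s / (1 + s powr of_real \<nu>))"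
proof -
  obtain C p b where hol: "F holomorphic_on {s. 0 < Re s}" and b: "0 < b"
    and bound: "\<And>s. 0 < Re s \<Longrightarrow> norm (F s) \<le> C * norm s powr p * exp (- b * norm s powr \<nu>)"
    using assms(1) by (rule bromwich_admissibleE) blast
  have ge1: "1 \<le> norm (1 + s powr of_real \<nu>)" if "0 < Re s" for s
    using norm_one_plus_powr_ge_one[OF that assms(2,3)] .
  have "norm (F s / (1 + s powr of_real \<nu>)) \<le> C * norm s powr p * exp (- b * norm s powr \<nu>)"
    if s: "0 < Re s" for s
  proof -
    have "norm (F s / (1 + s powr of_real \<nu>)) \<le> norm (F s)"
      using ge1[OF s] by (simp add: norm_divide divide_le_eq mult_le_cancel_left1)
    thus ?thesis using bound[OF s] by linarith
  qed
  moreover have "(\<lambda>s. F s / (1 + s powr of_real \<nu>)) holomorphic_on {s. 0 < Re s}"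
    using hol ge1 by (intro holomorphic_on_divide holomorphic_intros holomorphic_on_powr_right_half_plane) force+
  ultimately show ?thesis using b by (intro bromwich_admissibleI)
qed

lemma bromwich_admissible_line_bound:
  assumes "bromwich_admissible \<nu> F" "0 < \<nu>" "0 < c\<^sub>0"
  obtains M \<beta> where "0 < \<beta>" "0 \<le> M"
    "\<And>c y. c \<ge> c\<^sub>0 \<Longrightarrow> norm (F (Complex c y)) \<le> M * exp (- \<beta> * \<bar>y\<bar> powr \<nu>)"
proof -
  obtain C p b where b: "0 < b"
    and bound: "\<And>s. 0 < Re s \<Longrightarrow> norm (F s) \<le> C * norm s powr p * exp (- b * norm s powr \<nu>)"
    using assms(1) by (rule bromwich_admissibleE) blast
  \<comment> \<open>Half of the decay absorbs the factor \<open>norm s powr p\<close>.\<close>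
  have "continuous_on {c\<^sub>0..} (\<lambda>r. r powr p * exp (- (b/2) * r powr \<nu>))"
    using assms by (intro continuous_intros) auto
  moreover have "((\<lambda>r. r powr p * exp (- (b/2) * r powr \<nu>)) \<longlongrightarrow> 0) at_top"
    using assms b by real_asymp
  ultimately obtain A where A: "\<And>r. r \<ge> c\<^sub>0 \<Longrightarrow> \<bar>r powr p * exp (- (b/2) * r powr \<nu>)\<bar> \<le> A"
    using bounded_on_atLeast_if_tendsto_zero by blast
  have A0: "0 \<le> A" using A[of c\<^sub>0] by (meson abs_ge_zero order_trans order_refl)
  have "norm (F (Complex c y)) \<le> \<bar>C\<bar> * A * exp (- (b/2) * \<bar>y\<bar> powr \<nu>)" if c: "c \<ge> c\<^sub>0" for c y
  proof -
    define s where "s = Complex c y"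
    have Res: "0 < Re s" using c assms by (simp add: s_def)
    have ns: "norm s \<ge> c\<^sub>0" using complex_Re_le_cmod[of s] c by (simp add: s_def)
    have ny: "\<bar>y\<bar> powr \<nu> \<le> norm s powr \<nu>"
      using abs_Im_le_cmod[of s] assms by (intro powr_mono2) (auto simp: s_def)
    have split: "exp (- b * norm s powr \<nu>) = exp (- (b/2) * norm s powr \<nu>) * exp (- (b/2) * norm s powr \<nu>)"
      by (simp flip: exp_add)
    have "norm (F s) \<le> C * (norm s powr p * exp (- (b/2) * norm s powr \<nu>)) * exp (- (b/2) * norm s powr \<nu>)"
      using bound[OF Res] unfolding split by (simp add: mult.assoc)
    also have "\<dots> \<le> \<bar>C\<bar> * (norm s powr p * exp (- (b/2) * norm s powr \<nu>)) * exp (- (b/2) * norm s powr \<nu>)"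
      by (intro mult_right_mono) auto
    also have "\<dots> \<le> \<bar>C\<bar> * A * exp (- (b/2) * \<bar>y\<bar> powr \<nu>)"
      using A[OF ns] ny b A0 by (intro mult_mono mult_left_mono) auto
    finally show ?thesis by (simp add: s_def)
  qed
  moreover have "0 < b/2" "0 \<le> \<bar>C\<bar> * A" using b A0 by auto
  ultimately show ?thesis using that by blast
qed

lemma continuous_on_Complex_line: "continuous_on UNIV (\<lambda>y. Complex c y)"
  unfolding Complex_eq by (intro continuous_intros)

lemma continuous_on_Complex_line_powr:
  assumes "0 < c"
  shows "continuous_on UNIV (\<lambda>y. Complex c y powr a)"
proof -
  have "continuous_on {s. 0 < Re s} (\<lambda>s. s powr a)"
    using holomorphic_on_powr_right_half_plane by (rule holomorphic_on_imp_continuous_on)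
  moreover have "range (Complex c) \<subseteq> {s. 0 < Re s}" using assms by auto
  ultimately show ?thesis using continuous_on_compose2[OF _ continuous_on_Complex_line] by blast
qed

lemma bromwich_admissible_continuous_on_line:
  assumes "bromwich_admissible \<nu> F" "0 < c"
  shows "continuous_on UNIV (\<lambda>y. F (Complex c y))"
proof -
  have "continuous_on {s. 0 < Re s} F"
    using assms(1) by (auto elim: bromwich_admissibleE intro: holomorphic_on_imp_continuous_on)
  moreover have "range (Complex c) \<subseteq> {s. 0 < Re s}" using assms(2) by auto
  ultimately show ?thesis using continuous_on_compose2[OF _ continuous_on_Complex_line] by blast
qed

lemma integrable_bromwich_integrand:
  assumes "bromwich_admissible \<nu> F" "0 < \<nu>" "0 < c"
  shows "integrable lborel (\<lambda>y. exp (Complex c y * of_real x) * F (Complex c y))"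
proof -
  obtain M \<beta> where "0 < \<beta>" "0 \<le> M"
    and bound: "\<And>y. norm (F (Complex c y)) \<le> M * exp (- \<beta> * \<bar>y\<bar> powr \<nu>)"
    using bromwich_admissible_line_bound[OF assms] by (metis order_refl)
  show ?thesis
  proof (rule Bochner_Integration.integrable_bound)
    show "integrable lborel (\<lambda>y. exp (c * x) * M * exp (- \<beta> * \<bar>y\<bar> powr \<nu>))"
      using integrable_exp_neg_mult_abs_powr[OF \<open>0 < \<beta>\<close> assms(2)] by (simp add: mult.assoc)
    have "continuous_on UNIV (\<lambda>y. exp (Complex c y * of_real x) * F (Complex c y))"
      using bromwich_admissible_continuous_on_line[OF assms(1,3)] continuous_on_Complex_line
      by (intro continuous_intros) auto
    thus "(\<lambda>y. exp (Complex c y * of_real x) * F (Complex c y)) \<in> borel_measurable lborel"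
      using borel_measurable_continuous_onI by simp
    show "AE y in lborel. norm (exp (Complex c y * of_real x) * F (Complex c y))
            \<le> norm (exp (c * x) * M * exp (- \<beta> * \<bar>y\<bar> powr \<nu>))"
      using bound \<open>0 \<le> M\<close> by (intro AE_I2) (simp add: norm_mult mult.assoc mult_left_mono)
  qed
qed

lemma bromwich_eq_LBINT:
  assumes "bromwich_admissible \<nu> F" "0 < \<nu>" "0 < c"
  shows "bromwich c F x = 1 / (2 * pi) * (LBINT y. exp (Complex c y * of_real x) * F (Complex c y))"
  unfolding bromwich_def using integral_lborel[OF integrable_bromwich_integrand[OF assms]] by simp

lemma bromwich_cong:
  assumes "\<And>y. F (Complex c y) = G (Complex c y)"
  shows "bromwich c F x = bromwich c G x"
  unfolding bromwich_def using assms by simp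

lemma bromwich_cmult:
  assumes "bromwich_admissible \<nu> F" "0 < \<nu>" "0 < c"
  shows "bromwich c (\<lambda>s. A * F s) x = A * bromwich c F x"
  unfolding bromwich_eq_LBINT[OF assms] bromwich_eq_LBINT[OF bromwich_admissible_cmult[OF assms(1)] assms(2,3)]
  by (simp add: mult_ac)

lemma borel_measurable_bromwich:
  assumes "bromwich_admissible \<nu> F" "0 < \<nu>" "0 < c"
  shows "bromwich c F \<in> borel_measurable lborel"
proof -
  have "(\<lambda>y. F (Complex c y)) \<in> borel_measurable lborel"
    using borel_measurable_continuous_onI[OF bromwich_admissible_continuous_on_line[OF assms(1,3)]]
    by simp
  hence "(\<lambda>p::real \<times> real. exp (Complex c (snd p) * of_real (fst p)) * F (Complex c (snd p)))
           \<in> borel_measurable (lborel \<Otimes>\<^sub>M lborel)"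
    unfolding Complex_eq by measurable
  hence "(\<lambda>x. LBINT y. exp (Complex c y * of_real x) * F (Complex c y)) \<in> borel_measurable lborel"
    by (intro lborel.borel_measurable_lebesgue_integral) (simp add: case_prod_beta')
  thus ?thesis unfolding bromwich_eq_LBINT[OF assms, abs_def] by measurable
qed

(* Cauchy's theorem on the rectangle with corners A, B, C, D. *)
lemma integral_vertical_sides_diff:
  fixes h :: "complex \<Rightarrow> complex" and c\<^sub>1 c\<^sub>2 T :: real
  defines "A \<equiv> Complex c\<^sub>1 (-T)" and "B \<equiv> Complex c\<^sub>2 (-T)"
    and "C \<equiv> Complex c\<^sub>2 T" and "D \<equiv> Complex c\<^sub>1 T"
  assumes hol: "h holomorphic_on S" and S: "convex S" "A \<in> S" "B \<in> S" "C \<in> S" "D \<in> S"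
    and T: "0 < T"
  shows "integral {-T..T} (\<lambda>y. h (Complex c\<^sub>2 y)) - integral {-T..T} (\<lambda>y. h (Complex c\<^sub>1 y))
           = \<i> * (contour_integral (linepath A B) h + contour_integral (linepath C D) h)"
proof -
  have seg: "closed_segment p q \<subseteq> S" if "p \<in> S" "q \<in> S" for p q
    using closed_segment_subset[OF that S(1)] .
  have side: "(h has_contour_integral contour_integral (linepath p q) h) (linepath p q)"
    if "p \<in> S" "q \<in> S" for p q
    using holomorphic_on_imp_continuous_on[OF hol] seg[OF that]
    by (intro has_contour_integral_integral contour_integrable_continuous_linepath)
       (rule continuous_on_subset)
  define iAB iBC iCD iAD where "iAB = contour_integral (linepath A B) h"
    and "iBC = contour_integral (linepath B C) h" and "iCD = contour_integral (linepath C D) h"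
    and "iAD = contour_integral (linepath A D) h"
  have AD: "(h has_contour_integral iAD) (linepath A D)" unfolding iAD_def using side S by blast
  have BC: "(h has_contour_integral iBC) (linepath B C)" unfolding iBC_def using side S by blast
  define g where "g = linepath A B +++ (linepath B C +++ (linepath C D +++ linepath D A))"
  have "(h has_contour_integral (iAB + (iBC + (iCD + - iAD)))) g"
    unfolding g_def iAB_def iCD_def using side S BC has_contour_integral_reversepath[OF _ AD]
    by (intro has_contour_integral_join) auto
  moreover have "(h has_contour_integral 0) g"
  proof (rule Cauchy_theorem_convex_simple[OF hol S(1)])
    show "valid_path g" unfolding g_def by (intro valid_path_join) auto
    show "path_image g \<subseteq> S"
      unfolding g_def using seg S by (simp add: path_image_join)
    show "pathfinish g = pathstart g" unfolding g_def by simp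
  qed
  ultimately have cycle: "iAB + (iBC + (iCD + - iAD)) = 0" using has_contour_integral_unique by blast
  have "integral {-T..T} (\<lambda>y. h (Complex c\<^sub>2 y)) = - \<i> * iBC"
    using has_contour_integral_linepath_same_Re_iff[of B c\<^sub>2 C "-T" T h iBC] BC T
    by (auto simp: B_def C_def)
  moreover have "integral {-T..T} (\<lambda>y. h (Complex c\<^sub>1 y)) = - \<i> * iAD"
    using has_contour_integral_linepath_same_Re_iff[of A c\<^sub>1 D "-T" T h iAD] AD T
    by (auto simp: A_def D_def)
  moreover have "- \<i> * iBC - - \<i> * iAD = \<i> * (iAB + iCD)"
    using cycle by algebra
  ultimately show ?thesis unfolding iAB_def iCD_def by simp
qed

lemma norm_integral_vertical_sides_diff_le:
  fixes h :: "complex \<Rightarrow> complex" and c\<^sub>1 c\<^sub>2 T B :: real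
  assumes hol: "h holomorphic_on S" and S: "convex S" "{s. c\<^sub>1 \<le> Re s \<and> Re s \<le> c\<^sub>2 \<and> \<bar>Im s\<bar> \<le> T} \<subseteq> S"
    and c: "c\<^sub>1 \<le> c\<^sub>2" and T: "0 < T"
    and bound: "\<And>s. c\<^sub>1 \<le> Re s \<Longrightarrow> Re s \<le> c\<^sub>2 \<Longrightarrow> \<bar>Im s\<bar> = T \<Longrightarrow> norm (h s) \<le> B"
  shows "norm (integral {-T..T} (\<lambda>y. h (Complex c\<^sub>2 y)) - integral {-T..T} (\<lambda>y. h (Complex c\<^sub>1 y)))
           \<le> 2 * (c\<^sub>2 - c\<^sub>1) * B"
proof -
  have horizontal: "norm (contour_integral (linepath (Complex c\<^sub>1 \<tau>) (Complex c\<^sub>2 \<tau>)) h) \<le> B * (c\<^sub>2 - c\<^sub>1)"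
    if "\<bar>\<tau>\<bar> = T" for \<tau>
  proof -
    have seg: "closed_segment (Complex c\<^sub>1 \<tau>) (Complex c\<^sub>2 \<tau>) = {s. Im s = \<tau> \<and> c\<^sub>1 \<le> Re s \<and> Re s \<le> c\<^sub>2}"
      using c by (auto simp: closed_segment_same_Im closed_segment_eq_real_ivl)
    have "continuous_on (closed_segment (Complex c\<^sub>1 \<tau>) (Complex c\<^sub>2 \<tau>)) h"
      by (rule continuous_on_subset[OF holomorphic_on_imp_continuous_on[OF hol]])
         (use S(2) that in \<open>auto simp: seg\<close>)
    moreover have "0 \<le> B" using bound[of "Complex c\<^sub>1 \<tau>"] c that by (auto intro: order.trans[OF norm_ge_zero])
    ultimately have "norm (contour_integral (linepath (Complex c\<^sub>1 \<tau>) (Complex c\<^sub>2 \<tau>)) h)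
                       \<le> B * norm (Complex c\<^sub>2 \<tau> - Complex c\<^sub>1 \<tau>)"
      using bound that unfolding seg
      by (intro contour_integral_bound_linepath contour_integrable_continuous_linepath) (auto simp: seg)
    also have "norm (Complex c\<^sub>2 \<tau> - Complex c\<^sub>1 \<tau>) = c\<^sub>2 - c\<^sub>1" using c by (simp add: cmod_def)
    finally show ?thesis .
  qed
  have triangle: "norm (\<i> * (a + b)) \<le> 2 * X" if "norm a \<le> X" "norm b \<le> X" for a b :: complex and X
    using that norm_triangle_ineq[of a b] by (simp add: norm_mult)
  have reverse: "contour_integral (linepath (Complex c\<^sub>2 T) (Complex c\<^sub>1 T)) h
                   = - contour_integral (linepath (Complex c\<^sub>1 T) (Complex c\<^sub>2 T)) h"
    using contour_integral_reversepath[OF valid_path_linepath, of "Complex c\<^sub>1 T" "Complex c\<^sub>2 T" h] by simp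
  have "integral {-T..T} (\<lambda>y. h (Complex c\<^sub>2 y)) - integral {-T..T} (\<lambda>y. h (Complex c\<^sub>1 y))
          = \<i> * (contour_integral (linepath (Complex c\<^sub>1 (-T)) (Complex c\<^sub>2 (-T))) h
                 + contour_integral (linepath (Complex c\<^sub>2 T) (Complex c\<^sub>1 T)) h)"
    using S c T by (intro integral_vertical_sides_diff[OF hol]) auto
  also have "norm \<dots> \<le> 2 * (B * (c\<^sub>2 - c\<^sub>1))"
    using horizontal[of "-T"] horizontal[of T] T unfolding reverse by (intro triangle) simp_all
  finally show ?thesis by (simp only: mult_ac)
qed

lemma bromwich_abscissa_independent:
  assumes F: "bromwich_admissible \<nu> F" and \<nu>: "0 < \<nu>" and c: "0 < c\<^sub>1" "c\<^sub>1 \<le> c\<^sub>2"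
  shows "bromwich c\<^sub>1 F x = bromwich c\<^sub>2 F x"
proof -
  define h where "h s = exp (s * of_real x) * F s" for s
  have "F holomorphic_on {s. 0 < Re s}" using F by (auto elim: bromwich_admissibleE)
  hence hol: "h holomorphic_on {s. 0 < Re s}" unfolding h_def by (intro holomorphic_intros)
  obtain M \<beta> where "0 < \<beta>"
    and bound: "\<And>c y. c \<ge> c\<^sub>1 \<Longrightarrow> norm (F (Complex c y)) \<le> M * exp (- \<beta> * \<bar>y\<bar> powr \<nu>)"
    by (rule bromwich_admissible_line_bound[OF F \<nu> c(1)]) blast
  define J where "J c T = integral {-T..T} (\<lambda>y. h (Complex c y))" for c T
  have J_lim: "((\<lambda>T. J c T) \<longlongrightarrow> integral UNIV (\<lambda>y. h (Complex c y))) at_top" if "0 < c" for c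
    unfolding J_def h_def using integrable_bromwich_integrand[OF F \<nu> that]
    by (rule tendsto_integral_symmetric_interval)
  define bd where "bd T = exp (c\<^sub>2 * \<bar>x\<bar>) * M * exp (- \<beta> * T powr \<nu>)" for T
  have h_bound: "norm (h s) \<le> bd \<bar>Im s\<bar>" if "c\<^sub>1 \<le> Re s" "Re s \<le> c\<^sub>2" for s
  proof -
    have "Re s * x \<le> Re s * \<bar>x\<bar>" using that c by (intro mult_left_mono) auto
    also have "\<dots> \<le> c\<^sub>2 * \<bar>x\<bar>" using that by (intro mult_right_mono) auto
    finally have "exp (Re s * x) \<le> exp (c\<^sub>2 * \<bar>x\<bar>)" by simp
    moreover have "norm (F s) \<le> M * exp (- \<beta> * \<bar>Im s\<bar> powr \<nu>)"
      using bound[of "Re s" "Im s"] that by simp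
    ultimately have "exp (Re s * x) * norm (F s) \<le> exp (c\<^sub>2 * \<bar>x\<bar>) * (M * exp (- \<beta> * \<bar>Im s\<bar> powr \<nu>))"
      by (intro mult_mono) auto
    thus ?thesis unfolding h_def bd_def by (simp add: norm_mult norm_exp_eq_Re mult.assoc)
  qed
  have "((\<lambda>T. J c\<^sub>2 T - J c\<^sub>1 T) \<longlongrightarrow> 0) at_top"
  proof (rule Lim_null_comparison)
    show "\<forall>\<^sub>F T in at_top. norm (J c\<^sub>2 T - J c\<^sub>1 T) \<le> 2 * (c\<^sub>2 - c\<^sub>1) * bd T"
      using eventually_gt_at_top[of 0]
    proof eventually_elim
      case (elim T)
      show ?case
        unfolding J_def using c elim h_bound
        by (intro norm_integral_vertical_sides_diff_le[OF hol convex_halfspace_Re_gt]) auto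
    qed
    show "((\<lambda>T. 2 * (c\<^sub>2 - c\<^sub>1) * bd T) \<longlongrightarrow> 0) at_top"
      unfolding bd_def using tendsto_exp_neg_mult_powr_at_top[OF \<open>0 < \<beta>\<close> \<nu>]
      by (intro tendsto_mult_right_zero)
  qed
  moreover have "((\<lambda>T. J c\<^sub>2 T - J c\<^sub>1 T) \<longlongrightarrow>
                   integral UNIV (\<lambda>y. h (Complex c\<^sub>2 y)) - integral UNIV (\<lambda>y. h (Complex c\<^sub>1 y))) at_top"
    using c by (intro tendsto_diff J_lim) auto
  ultimately have "integral UNIV (\<lambda>y. h (Complex c\<^sub>2 y)) - integral UNIV (\<lambda>y. h (Complex c\<^sub>1 y)) = 0"
    using tendsto_unique[OF trivial_limit_at_top_linorder] by blast
  thus ?thesis unfolding bromwich_def h_def by simp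
qed

lemma bromwich_norm_le_exp:
  assumes F: "bromwich_admissible \<nu> F" and \<nu>: "0 < \<nu>" and c\<^sub>0: "0 < c\<^sub>0"
  obtains K where "\<And>c. c \<ge> c\<^sub>0 \<Longrightarrow> norm (bromwich c F x) \<le> K * exp (c * x)"
proof -
  obtain M \<beta> where "0 < \<beta>"
    and bound: "\<And>c y. c \<ge> c\<^sub>0 \<Longrightarrow> norm (F (Complex c y)) \<le> M * exp (- \<beta> * \<bar>y\<bar> powr \<nu>)"
    by (rule bromwich_admissible_line_bound[OF F \<nu> c\<^sub>0]) blast
  define L where "L = (LBINT y. exp (- \<beta> * \<bar>y\<bar> powr \<nu>))"
  have "norm (bromwich c F x) \<le> M * L / (2 * pi) * exp (c * x)" if c: "c \<ge> c\<^sub>0" for c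
  proof -
    have "norm (LBINT y. exp (Complex c y * of_real x) * F (Complex c y))
            \<le> (LBINT y. exp (c * x) * (M * exp (- \<beta> * \<bar>y\<bar> powr \<nu>)))"
    proof (rule Bochner_Integration.integral_norm_bound_integral)
      show "integrable lborel (\<lambda>y. exp (Complex c y * of_real x) * F (Complex c y))"
        using c c\<^sub>0 by (intro integrable_bromwich_integrand[OF F \<nu>]) simp
      show "integrable lborel (\<lambda>y. exp (c * x) * (M * exp (- \<beta> * \<bar>y\<bar> powr \<nu>)))"
        using integrable_exp_neg_mult_abs_powr[OF \<open>0 < \<beta>\<close> \<nu>] by simp
      show "norm (exp (Complex c y * of_real x) * F (Complex c y)) \<le> exp (c * x) * (M * exp (- \<beta> * \<bar>y\<bar> powr \<nu>))"
        for y using bound[OF c, of y] by (simp add: norm_mult)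
    qed
    also have "\<dots> = exp (c * x) * (M * L)" unfolding L_def by simp
    finally show ?thesis
      unfolding bromwich_eq_LBINT[OF F \<nu> order.strict_trans2[OF c\<^sub>0 c]]
      by (simp add: norm_mult norm_divide field_simps)
  qed
  thus ?thesis using that by blast
qed

lemma bromwich_eq_0_if_neg:
  assumes F: "bromwich_admissible \<nu> F" and \<nu>: "0 < \<nu>" and c: "0 < c" and x: "x < 0"
  shows "bromwich c F x = 0"
proof -
  obtain K where K: "\<And>c'. c' \<ge> c \<Longrightarrow> norm (bromwich c' F x) \<le> K * exp (c' * x)"
    using bromwich_norm_le_exp[OF F \<nu> c] by blast
  \<comment> \<open>Moving the line of integration to the right, the bound \<open>K e\<^sup>c\<^sup>x\<close> tends to 0 for \<open>x < 0\<close>.\<close>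
  have "\<forall>\<^sub>F c' in at_top. norm (bromwich c F x) \<le> K * exp (c' * x)"
    using eventually_ge_at_top[of c]
  proof eventually_elim
    case (elim c')
    thus ?case using K[OF elim] bromwich_abscissa_independent[OF F \<nu> c elim] by simp
  qed
  moreover have "((\<lambda>c'. K * exp (c' * x)) \<longlongrightarrow> 0) at_top" using x by real_asymp
  ultimately have "norm (bromwich c F x) \<le> 0"
    using tendsto_le[OF trivial_limit_at_top_linorder _ tendsto_const] by blast
  thus ?thesis by simp
qed

section \<open>Laplace transforms of powers and Riemann--Liouville integrals\<close>

lemma lborel_integral_powr_exp_neg_mult:
  fixes a s\<^sub>0 :: real
  assumes a: "0 < a" and s\<^sub>0: "0 < s\<^sub>0"
  shows "integrable lborel (\<lambda>w. indicator {0..} w * (w powr (a - 1) * exp (- (s\<^sub>0 * w))))"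
    and "(LBINT w. indicator {0..} w * (w powr (a - 1) * exp (- (s\<^sub>0 * w)))) = Gamma a / s\<^sub>0 powr a"
proof -
  define g where "g w = indicator {0..} w * (w powr (a - 1) / exp w)" for w :: real
  define f where "f w = indicator {0..} w * (w powr (a - 1) * exp (- (s\<^sub>0 * w)))" for w :: real
  have set_int: "set_integrable lborel {0..} (\<lambda>w. w powr (a - 1) / exp w)"
    using Gamma_integral_real[OF a] by (intro set_integrable_lborel_if_nonneg_integrable_on) auto
  hence g_int: "integrable lborel g" unfolding set_integrable_def g_def by (simp add: mult.commute)
  have g_integral: "(LBINT w. g w) = Gamma a"
    using set_borel_integral_eq_integral(2)[OF set_int] integral_unique[OF Gamma_integral_real[OF a]]
    unfolding set_lebesgue_integral_def g_def by (simp add: mult.commute)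
  have g_scaled: "g (0 + s\<^sub>0 * w) = s\<^sub>0 powr (a - 1) * f w" for w
    using s\<^sub>0 by (cases "w \<ge> 0") (auto simp: g_def f_def powr_mult exp_minus field_simps zero_le_mult_iff)
  have "integrable lborel (\<lambda>w. g (0 + s\<^sub>0 * w) / s\<^sub>0 powr (a - 1))"
    using lborel_integrable_real_affine[OF g_int, of s\<^sub>0 0] s\<^sub>0 by simp
  thus "integrable lborel f" unfolding g_scaled using s\<^sub>0 by simp
  have "Gamma a = s\<^sub>0 * (LBINT w. g (0 + s\<^sub>0 * w))"
    using lborel_integral_real_affine[of s\<^sub>0 g 0] s\<^sub>0 g_integral by simp
  also have "\<dots> = s\<^sub>0 powr a * (LBINT w. f w)"
    unfolding g_scaled using s\<^sub>0 by (simp add: powr_diff)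
  finally show "(LBINT w. f w) = Gamma a / s\<^sub>0 powr a" using s\<^sub>0 by (simp add: field_simps)
qed

lemma sums_Gamma_div_powr_binomial:
  fixes \<beta> s\<^sub>0 :: real and z :: complex
  assumes \<beta>: "0 \<le> \<beta>" and s\<^sub>0: "0 < s\<^sub>0" and z: "norm z < s\<^sub>0"
  shows "(\<lambda>n. of_real (Gamma (\<beta> + real n + 1) / s\<^sub>0 powr (\<beta> + real n + 1)) * ((- z) ^ n / fact n))
           sums (of_real (Gamma (\<beta> + 1)) * (of_real s\<^sub>0 + z) powr (- of_real (\<beta> + 1)))"
proof -
  define a :: complex where "a = - of_real (\<beta> + 1)"
  define C :: complex where "C = of_real (Gamma (\<beta> + 1) / s\<^sub>0 powr (\<beta> + 1))"
  have "(\<lambda>n. C * ((a gchoose n) * (z / of_real s\<^sub>0) ^ n)) sums (C * (1 + z / of_real s\<^sub>0) powr a)"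
    using z s\<^sub>0 by (intro sums_mult gen_binomial_complex) (simp add: norm_divide)
  moreover have "C * ((a gchoose n) * (z / of_real s\<^sub>0) ^ n)
                   = of_real (Gamma (\<beta> + real n + 1) / s\<^sub>0 powr (\<beta> + real n + 1)) * ((- z) ^ n / fact n)" for n
  proof -
    have "\<beta> + 1 \<notin> \<int>\<^sub>\<le>\<^sub>0" using \<beta> by (auto dest: nonpos_Ints_nonpos)
    hence "pochhammer (\<beta> + 1) n = Gamma (\<beta> + 1 + real n) / Gamma (\<beta> + 1)"
      by (rule pochhammer_Gamma)
    moreover have "0 < Gamma (\<beta> + 1)" using \<beta> by (intro Gamma_real_pos) simp
    ultimately have "Gamma (\<beta> + real n + 1) = Gamma (\<beta> + 1) * pochhammer (\<beta> + 1) n"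
      by (simp add: add_ac)
    moreover have "s\<^sub>0 powr (\<beta> + real n + 1) = s\<^sub>0 powr (\<beta> + 1) * s\<^sub>0 ^ n"
      using s\<^sub>0 by (simp add: powr_add powr_realpow add_ac)
    moreover have "a gchoose n = (- 1) ^ n * of_real (pochhammer (\<beta> + 1) n) / fact n"
      unfolding a_def by (simp add: gbinomial_pochhammer pochhammer_of_real[symmetric] add.commute)
    ultimately show ?thesis
      unfolding C_def using s\<^sub>0 by (simp add: power_divide power_minus' field_simps)
  qed
  moreover have "C * (1 + z / of_real s\<^sub>0) powr a
                   = of_real (Gamma (\<beta> + 1)) * (of_real s\<^sub>0 + z) powr (- of_real (\<beta> + 1))"
  proof -
    have "(of_real s\<^sub>0 + z) powr a = of_real s\<^sub>0 powr a * (1 + z / of_real s\<^sub>0) powr a"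
      using s\<^sub>0 powr_times_real_left[of "of_real s\<^sub>0" "1 + z / of_real s\<^sub>0" a]
      by (simp add: distrib_left)
    moreover have "of_real s\<^sub>0 powr a = of_real (1 / s\<^sub>0 powr (\<beta> + 1))"
    proof -
      have "of_real s\<^sub>0 powr a = of_real (s\<^sub>0 powr (- (\<beta> + 1)))"
        unfolding a_def using s\<^sub>0 powr_of_real[of s\<^sub>0 "- (\<beta> + 1)"] by simp
      thus ?thesis by (simp only: powr_minus_divide)
    qed
    ultimately show ?thesis unfolding C_def a_def by (simp add: field_simps)
  qed
  ultimately show ?thesis by simp
qed

lemma sums_powr_exp_series:
  fixes \<beta> s\<^sub>0 w :: real and z :: complex
  shows "(\<lambda>n. of_real (indicator {0..} w * (w powr (\<beta> + real n) * exp (- (s\<^sub>0 * w)))) * ((- z) ^ n / fact n))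
           sums (indicator {0..} w *\<^sub>R (of_real (w powr \<beta>) * exp (- (of_real s\<^sub>0 + z) * of_real w)))"
proof (cases "w \<ge> 0")
  case True
  define C where "C = w powr \<beta> * exp (- (s\<^sub>0 * w))"
  have "(\<lambda>n. of_real C * ((- z * of_real w) ^ n /\<^sub>R fact n)) sums (of_real C * exp (- z * of_real w))"
    by (intro sums_mult exp_converges)
  moreover have "of_real C * ((- z * of_real w) ^ n /\<^sub>R fact n)
                   = of_real (w powr (\<beta> + real n) * exp (- (s\<^sub>0 * w))) * ((- z) ^ n / fact n)" for n
  proof -
    have "(- z * of_real w) ^ n = (- z) ^ n * of_real w ^ n" by (rule power_mult_distrib)
    thus ?thesis
      unfolding C_def using True by (cases "w = 0") (simp_all add: powr_add powr_realpow scaleR_conv_of_real field_simps)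
  qed
  moreover have "of_real C * exp (- z * of_real w) = of_real (w powr \<beta>) * exp (- (of_real s\<^sub>0 + z) * of_real w)"
    unfolding C_def by (simp add: algebra_simps exp_add[symmetric] flip: exp_of_real)
  ultimately show ?thesis using True by simp
qed simp

(* Expanding e^-(z w) turns the integral into a series of Gamma integrals, a binomial series. *)
lemma laplace_powr_disc:
  fixes \<beta> s\<^sub>0 :: real and z :: complex
  assumes \<beta>: "0 \<le> \<beta>" and s\<^sub>0: "0 < s\<^sub>0" and z: "norm z < s\<^sub>0"
  shows "integrable lborel (\<lambda>w. indicator {0..} w *\<^sub>R (of_real (w powr \<beta>) * exp (- (of_real s\<^sub>0 + z) * of_real w)))"
    and "(LBINT w. indicator {0..} w *\<^sub>R (of_real (w powr \<beta>) * exp (- (of_real s\<^sub>0 + z) * of_real w)))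
           = of_real (Gamma (\<beta> + 1)) * (of_real s\<^sub>0 + z) powr (- of_real (\<beta> + 1))"
proof -
  define \<phi> where "\<phi> w = indicator {0..} w *\<^sub>R (of_real (w powr \<beta>) * exp (- (of_real s\<^sub>0 + z) * of_real w))"
    for w
  define A where "A n = Gamma (\<beta> + real n + 1) / s\<^sub>0 powr (\<beta> + real n + 1)" for n :: nat
  define g where "g n w = indicator {0..} w * (w powr (\<beta> + real n) * exp (- (s\<^sub>0 * w)))" for n w
  define f where "f n w = of_real (g n w) * ((- z) ^ n / fact n)" for n w
  have g_int: "integrable lborel (g n)" and g_integral: "(LBINT w. g n w) = A n" for n
    using lborel_integral_powr_exp_neg_mult[of "\<beta> + real n + 1" s\<^sub>0] \<beta> s\<^sub>0 unfolding g_def A_def by auto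
  have g_nonneg: "0 \<le> g n w" for n w unfolding g_def by (auto simp: indicator_def)
  have g_eq: "g n w = g 0 w * w ^ n" for n w
    unfolding g_def by (cases "w > 0") (auto simp: indicator_def powr_add powr_realpow)
  have f_int: "integrable lborel (f n)" for n unfolding f_def using g_int by simp
  have f_integral: "(LBINT w. f n w) = of_real (A n) * ((- z) ^ n / fact n)" for n
    unfolding f_def using g_integral[of n] by (simp add: integral_mult_left_zero)
  have norm_f: "norm (f n w) = g n w * norm z ^ n / fact n" for n w
    unfolding f_def using g_nonneg[of n w] by (simp add: norm_mult norm_divide norm_power)
  have f_sums: "(\<lambda>n. f n w) sums \<phi> w" for w
    unfolding f_def g_def \<phi>_def by (rule sums_powr_exp_series)
  have norm_f_summable: "summable (\<lambda>n. norm (f n w))" for w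
  proof -
    have "norm (f n w) = g 0 w * ((norm z * w) ^ n / fact n)" for n
      unfolding norm_f g_eq[of n] by (simp add: power_mult_distrib)
    thus ?thesis using summable_mult[OF summable_exp[of "norm z * w"], of "g 0 w"]
      by (simp add: divide_inverse mult.commute)
  qed
  have "(\<lambda>n. of_real (A n * (norm z ^ n / fact n)) :: complex) sums
          (of_real (Gamma (\<beta> + 1)) * (of_real s\<^sub>0 - of_real (norm z)) powr (- of_real (\<beta> + 1)))"
    using sums_Gamma_div_powr_binomial[OF \<beta> s\<^sub>0, of "- of_real (norm z)"] z unfolding A_def
    by (simp add: power_minus')
  hence "summable (\<lambda>n. A n * (norm z ^ n / fact n))"
    using summable_of_real_iff sums_summable by blast
  hence integral_norm_f_summable: "summable (\<lambda>n. LBINT w. norm (f n w))"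
    unfolding norm_f using g_integral by simp
  have \<phi>_eq: "\<phi> = (\<lambda>w. \<Sum>n. f n w)" using f_sums by (auto simp: sums_iff)
  show "integrable lborel \<phi>"
    unfolding \<phi>_eq by (rule integrable_suminf[OF f_int AE_I2[OF norm_f_summable] integral_norm_f_summable])
  have "(LBINT w. \<phi> w) = (\<Sum>n. LBINT w. f n w)"
    unfolding \<phi>_eq by (rule integral_suminf[OF f_int AE_I2[OF norm_f_summable] integral_norm_f_summable])
  also have "\<dots> = of_real (Gamma (\<beta> + 1)) * (of_real s\<^sub>0 + z) powr (- of_real (\<beta> + 1))"
    unfolding f_integral A_def using sums_Gamma_div_powr_binomial[OF assms] by (rule sums_unique[symmetric])
  finally show "(LBINT w. \<phi> w) = of_real (Gamma (\<beta> + 1)) * (of_real s\<^sub>0 + z) powr (- of_real (\<beta> + 1))" .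
qed

lemma norm_diff_norm_sq_div_Re_less:
  fixes s :: complex
  assumes "0 < Re s"
  shows "norm (s - of_real (norm s ^ 2 / Re s)) < norm s ^ 2 / Re s"
proof -
  define s\<^sub>0 where "s\<^sub>0 = norm s ^ 2 / Re s"
  have "s \<noteq> 0" using assms by auto
  hence s\<^sub>0: "0 < s\<^sub>0" "s\<^sub>0 * Re s = norm s ^ 2" using assms by (auto simp: s\<^sub>0_def)
  have "norm (s - of_real s\<^sub>0) ^ 2 = (Re s - s\<^sub>0) ^ 2 + Im s ^ 2" by (simp add: cmod_power2)
  also have "\<dots> = s\<^sub>0 ^ 2 - norm s ^ 2"
    using s\<^sub>0(2) cmod_power2[of s] by (simp add: power2_diff algebra_simps)
  also have "\<dots> < s\<^sub>0 ^ 2" using assms by auto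
  finally show ?thesis unfolding s\<^sub>0_def[symmetric] using s\<^sub>0(1) by (simp add: power_less_imp_less_base)
qed

lemma laplace_powr:
  fixes \<beta> :: real and s :: complex
  assumes "0 \<le> \<beta>" "0 < Re s"
  shows "integrable lborel (\<lambda>w. indicator {0..} w *\<^sub>R (of_real (w powr \<beta>) * exp (- s * of_real w)))"
    and "(LBINT w. indicator {0..} w *\<^sub>R (of_real (w powr \<beta>) * exp (- s * of_real w)))
           = of_real (Gamma (\<beta> + 1)) * s powr (- of_real (\<beta> + 1))"
proof -
  \<comment> \<open>\<open>s\<close> lies in the disc of radius \<open>s\<^sub>0\<close> around \<open>s\<^sub>0\<close>.\<close>
  define s\<^sub>0 where "s\<^sub>0 = norm s ^ 2 / Re s"
  have "s \<noteq> 0" using assms by auto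
  hence s\<^sub>0: "0 < s\<^sub>0" using assms by (auto simp: s\<^sub>0_def)
  have s: "of_real s\<^sub>0 + (s - of_real s\<^sub>0) = s" by simp
  show "integrable lborel (\<lambda>w. indicator {0..} w *\<^sub>R (of_real (w powr \<beta>) * exp (- s * of_real w)))"
    and "(LBINT w. indicator {0..} w *\<^sub>R (of_real (w powr \<beta>) * exp (- s * of_real w)))
           = of_real (Gamma (\<beta> + 1)) * s powr (- of_real (\<beta> + 1))"
    using laplace_powr_disc[OF assms(1) s\<^sub>0, of "s - of_real s\<^sub>0"] norm_diff_norm_sq_div_Re_less[OF assms(2)]
    unfolding s s\<^sub>0_def by auto
qed

lemma integrable_powr_mult_bromwich_kernel:
  assumes G: "bromwich_admissible \<nu> G" and \<nu>: "0 < \<nu>" and c: "0 < c" and \<beta>: "0 \<le> \<beta>"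
  shows "integrable (lborel \<Otimes>\<^sub>M lborel) (\<lambda>(w, y). indicator {0..} w *\<^sub>R (of_real (w powr \<beta>) *
           (exp (Complex c y * of_real (t - w)) * G (Complex c y))))"
proof -
  define k where "k = (\<lambda>(w, y). indicator {0..} w *\<^sub>R (of_real (w powr \<beta>) *
                         (exp (Complex c y * of_real (t - w)) * G (Complex c y))))"
  have G_line: "integrable lborel (\<lambda>y. G (Complex c y))"
    using integrable_bromwich_integrand[OF G \<nu> c, of 0] by simp
  hence "(\<lambda>p::real \<times> real. G (Complex c (snd p))) \<in> borel_measurable (lborel \<Otimes>\<^sub>M lborel)"
    by (intro measurable_compose[OF measurable_snd]) auto
  hence k_meas: "k \<in> borel_measurable (lborel \<Otimes>\<^sub>M lborel)"
    unfolding k_def case_prod_beta Complex_eq by measurable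
  have norm_k: "(LBINT y. norm (k (w, y))) = exp (c * t) * (LBINT y. norm (G (Complex c y)))
                  * (indicator {0..} w * (w powr (\<beta> + 1 - 1) * exp (- (c * w))))" for w
  proof -
    have "norm (k (w, y)) = indicator {0..} w * w powr \<beta> * exp (c * (t - w)) * norm (G (Complex c y))" for y
      unfolding k_def by (simp add: norm_mult indicator_def)
    moreover have "exp (c * (t - w)) = exp (c * t) * exp (- (c * w))"
      by (simp add: right_diff_distrib exp_diff exp_minus field_simps)
    ultimately show ?thesis by (simp add: mult_ac)
  qed
  have "integrable (lborel \<Otimes>\<^sub>M lborel) k"
  proof (rule lborel_pair.Fubini_integrable[OF k_meas])
    show "integrable lborel (\<lambda>w. LBINT y. norm (k (w, y)))"
      unfolding norm_k using lborel_integral_powr_exp_neg_mult(1)[of "\<beta> + 1" c] \<beta> c by simp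
    show "AE w in lborel. integrable lborel (\<lambda>y. k (w, y))"
    proof (rule AE_I2)
      fix w
      show "integrable lborel (\<lambda>y. k (w, y))"
        unfolding k_def prod.case using integrable_bromwich_integrand[OF G \<nu> c, of "t - w"]
        by (intro integrable_scaleR_right integrable_mult_right)
    qed
  qed
  thus ?thesis unfolding k_def .
qed

lemma integral_powr_mult_bromwich_shifted:
  assumes G: "bromwich_admissible \<nu> G" and \<nu>: "0 < \<nu>" and c: "0 < c" and \<beta>: "0 \<le> \<beta>"
  shows "integrable lborel (\<lambda>w. indicator {0..} w *\<^sub>R (of_real (w powr \<beta>) * bromwich c G (t - w)))"
    and "(LBINT w. indicator {0..} w *\<^sub>R (of_real (w powr \<beta>) * bromwich c G (t - w)))
           = of_real (Gamma (\<beta> + 1)) * bromwich c (\<lambda>s. s powr (- of_real (\<beta> + 1)) * G s) t"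
proof -
  define k where "k = (\<lambda>(w, y). indicator {0..} w *\<^sub>R (of_real (w powr \<beta>) *
                         (exp (Complex c y * of_real (t - w)) * G (Complex c y))))"
  define G' where "G' s = s powr (- of_real (\<beta> + 1)) * G s" for s
  have k_int: "integrable (lborel \<Otimes>\<^sub>M lborel) k"
    unfolding k_def by (rule integrable_powr_mult_bromwich_kernel[OF assms])
  have inner_y: "indicator {0..} w *\<^sub>R (of_real (w powr \<beta>) * bromwich c G (t - w))
                   = 1 / (2 * pi) * (LBINT y. k (w, y))" for w
    unfolding k_def bromwich_eq_LBINT[OF G \<nu> c] by simp
  have inner_w: "(LBINT w. k (w, y)) = of_real (Gamma (\<beta> + 1)) * (exp (Complex c y * of_real t) * G' (Complex c y))"
    for y
  proof -
    define s where "s = Complex c y"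
    have "0 < Re s" using c by (simp add: s_def)
    have "k (w, y) = (exp (s * of_real t) * G s) *
                     (indicator {0..} w *\<^sub>R (of_real (w powr \<beta>) * exp (- s * of_real w)))" for w
      unfolding k_def s_def by (simp add: algebra_simps exp_diff exp_minus field_simps)
    hence "(LBINT w. k (w, y)) = (LBINT w. (exp (s * of_real t) * G s) *
             (indicator {0..} w *\<^sub>R (of_real (w powr \<beta>) * exp (- s * of_real w))))"
      by (simp only:)
    also have "\<dots> = (exp (s * of_real t) * G s) *
             (LBINT w. indicator {0..} w *\<^sub>R (of_real (w powr \<beta>) * exp (- s * of_real w)))"
      by (rule integral_mult_right_zero)
    also have "\<dots> = (exp (s * of_real t) * G s) * (of_real (Gamma (\<beta> + 1)) * s powr (- of_real (\<beta> + 1)))"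
      unfolding laplace_powr(2)[OF \<beta> \<open>0 < Re s\<close>] ..
    finally show ?thesis unfolding G'_def s_def by (simp add: mult_ac)
  qed
  show "integrable lborel (\<lambda>w. indicator {0..} w *\<^sub>R (of_real (w powr \<beta>) * bromwich c G (t - w)))"
    unfolding inner_y using lborel_pair.integrable_fst'[OF k_int] by simp
  have "(LBINT w. indicator {0..} w *\<^sub>R (of_real (w powr \<beta>) * bromwich c G (t - w)))
          = 1 / (2 * pi) * (LBINT w. LBINT y. k (w, y))"
    unfolding inner_y by simp
  also have "(LBINT w. LBINT y. k (w, y)) = (LBINT y. LBINT w. k (w, y))"
    using lborel_pair.Fubini_integral[of "\<lambda>w y. k (w, y)", unfolded case_prod_eta, OF k_int] by simp
  also have "\<dots> = of_real (Gamma (\<beta> + 1)) * (LBINT y. exp (Complex c y * of_real t) * G' (Complex c y))"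
    unfolding inner_w by simp
  also have "\<dots> = of_real (Gamma (\<beta> + 1)) * (of_real (2 * pi) * bromwich c G' t)"
    unfolding G'_def bromwich_eq_LBINT[OF bromwich_admissible_mult_powr[OF G] \<nu> c] by simp
  finally show "(LBINT w. indicator {0..} w *\<^sub>R (of_real (w powr \<beta>) * bromwich c G (t - w)))
                  = of_real (Gamma (\<beta> + 1)) * bromwich c G' t"
    by simp
qed

lemma integral_powr_conv_bromwich:
  assumes G: "bromwich_admissible \<nu> G" and \<nu>: "0 < \<nu>" and c: "0 < c" and \<beta>: "0 \<le> \<beta>"
  shows "integrable lborel (\<lambda>x. indicator {0..t} x *\<^sub>R (of_real ((t - x) powr \<beta>) * bromwich c G x))"
    and "(LBINT x. indicator {0..t} x *\<^sub>R (of_real ((t - x) powr \<beta>) * bromwich c G x))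
           = of_real (Gamma (\<beta> + 1)) * bromwich c (\<lambda>s. s powr (- of_real (\<beta> + 1)) * G s) t"
proof -
  define R where "R w = indicator {0..} w *\<^sub>R (of_real (w powr \<beta>) * bromwich c G (t - w))" for w
  \<comment> \<open>\<open>bromwich c G\<close> vanishes on negative reals, so the integral over \<open>[0, t]\<close> is one over \<open>(-\<infinity>, t]\<close>.\<close>
  have causal: "indicator {0..t} x *\<^sub>R (of_real ((t - x) powr \<beta>) * bromwich c G x) = R (t + (-1) * x)" for x
    using bromwich_eq_0_if_neg[OF G \<nu> c, of x] unfolding R_def
    by (cases "x < 0") (auto simp: indicator_def)
  show "integrable lborel (\<lambda>x. indicator {0..t} x *\<^sub>R (of_real ((t - x) powr \<beta>) * bromwich c G x))"
    unfolding causal using integral_powr_mult_bromwich_shifted(1)[OF assms, of t, folded R_def]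
      lborel_integrable_real_affine_iff[of "-1" R t] by simp
  show "(LBINT x. indicator {0..t} x *\<^sub>R (of_real ((t - x) powr \<beta>) * bromwich c G x))
           = of_real (Gamma (\<beta> + 1)) * bromwich c (\<lambda>s. s powr (- of_real (\<beta> + 1)) * G s) t"
    unfolding causal using lborel_integral_real_affine[of "-1" R t] integral_powr_mult_bromwich_shifted(2)[OF assms]
    by (simp add: R_def)
qed

section \<open>Convolution with the Mittag-Leffler function\<close>

lemma Gamma_plus_one_ge:
  fixes x M :: real
  assumes x: "0 \<le> x" and M: "0 < M"
  shows "M powr x * exp (- (M + 1)) \<le> Gamma (x + 1)"
proof -
  have Gamma: "((\<lambda>t. t powr (x + 1 - 1) / exp t) has_integral Gamma (x + 1)) {0..}"
    using x by (intro Gamma_integral_real) simp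
  have "integral {M..M+1} (\<lambda>t. M powr x * exp (- (M + 1)))
          \<le> integral {M..M+1} (\<lambda>t. t powr (x + 1 - 1) / exp t)"
  proof (rule integral_le)
    show "(\<lambda>t. t powr (x + 1 - 1) / exp t) integrable_on {M..M+1}"
      using M by (intro integrable_continuous_interval continuous_intros) auto
    show "M powr x * exp (- (M + 1)) \<le> t powr (x + 1 - 1) / exp t" if "t \<in> {M..M+1}" for t
    proof -
      have "M powr x \<le> t powr x" using that M x by (intro powr_mono2) auto
      moreover have "exp (- (M + 1)) \<le> exp (- t)" using that by simp
      ultimately show ?thesis by (simp add: exp_minus divide_inverse mult_mono)
    qed
  qed (intro integrable_continuous_interval continuous_intros)
  also have "\<dots> \<le> integral {0..} (\<lambda>t. t powr (x + 1 - 1) / exp t)"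
    using M Gamma by (intro integral_subset_le integrable_continuous_interval continuous_intros) auto
  also have "\<dots> = Gamma (x + 1)" using Gamma by (rule integral_unique)
  finally show ?thesis by simp
qed

lemma summable_mittag_leffler_series:
  fixes r \<nu> :: real
  assumes r: "0 \<le> r" and \<nu>: "0 < \<nu>"
  shows "summable (\<lambda>k. r ^ k / Gamma (real k * \<nu> + 1))"
proof (rule summable_comparison_test')
  define M where "M = max 1 ((2 * r) powr (1 / \<nu>))"
  have M: "0 < M" unfolding M_def by auto
  have "2 * r \<le> M powr \<nu>"
  proof (cases "r = 0")
    case False
    hence "2 * r = ((2 * r) powr (1 / \<nu>)) powr \<nu>" using r \<nu> by (simp add: powr_powr)
    also have "\<dots> \<le> M powr \<nu>" unfolding M_def using \<nu> by (intro powr_mono2) auto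
    finally show ?thesis .
  qed (use M in simp)
  hence ratio: "r / M powr \<nu> \<le> 1/2" using M by (simp add: field_simps)
  show "summable (\<lambda>k. exp (M + 1) * (1/2) ^ k)" by (intro summable_mult summable_geometric) auto
  fix k :: nat
  have Gamma_pos: "0 < Gamma (real k * \<nu> + 1)" using \<nu> by (intro Gamma_real_pos) (simp add: add_nonneg_pos)
  have "r ^ k / Gamma (real k * \<nu> + 1) \<le> r ^ k / (M powr (real k * \<nu>) * exp (- (M + 1)))"
    using Gamma_plus_one_ge[of "real k * \<nu>" M] \<nu> M Gamma_pos r by (intro divide_left_mono) auto
  also have "\<dots> = exp (M + 1) * (r / M powr \<nu>) ^ k"
  proof -
    have "M powr (real k * \<nu>) = (M powr \<nu>) ^ k"
      using M by (simp add: powr_realpow[symmetric] powr_powr mult.commute)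
    thus ?thesis unfolding exp_minus[of "M + 1"] using M by (simp add: power_divide field_simps)
  qed
  also have "\<dots> \<le> exp (M + 1) * (1/2) ^ k"
    using ratio r M by (intro mult_left_mono power_mono) auto
  finally show "norm (r ^ k / Gamma (real k * \<nu> + 1)) \<le> exp (M + 1) * (1/2) ^ k"
    using Gamma_pos r by simp
qed

lemma mittag_leffler_sums:
  assumes "0 < \<nu>"
  shows "(\<lambda>k. z ^ k / Gamma (real k * \<nu> + 1)) sums mittag_leffler \<nu> z"
proof -
  have Gamma_pos: "0 < Gamma (real k * \<nu> + 1)" for k
    using assms by (intro Gamma_real_pos) (simp add: add_nonneg_pos)
  have "norm (z ^ k / Gamma (real k * \<nu> + 1)) = \<bar>z\<bar> ^ k / Gamma (real k * \<nu> + 1)" for k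
    using abs_of_pos[OF Gamma_pos[of k]] by (simp add: power_abs)
  hence "summable (\<lambda>k. norm (z ^ k / Gamma (real k * \<nu> + 1)))"
    using summable_mittag_leffler_series[OF abs_ge_zero assms, of z] by simp
  thus ?thesis unfolding mittag_leffler_def by (rule summable_sums[OF summable_norm_cancel])
qed

lemma integral_mittag_leffler_term_conv_bromwich:
  fixes k :: nat and t :: real
  assumes G: "bromwich_admissible \<nu> G" and \<nu>: "0 < \<nu>" and c: "0 < c"
  defines "f \<equiv> \<lambda>x. indicator {0..t} x *\<^sub>R
                  (of_real ((- ((t - x) powr \<nu>)) ^ k / Gamma (real k * \<nu> + 1)) * bromwich c G x)"
  shows "integrable lborel f"
    and "(LBINT x. f x) = (-1) ^ k * bromwich c (\<lambda>s. s powr (- of_real (real k * \<nu> + 1)) * G s) t"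
proof -
  define \<gamma> where "\<gamma> = Gamma (real k * \<nu> + 1)"
  have "0 < \<gamma>" unfolding \<gamma>_def using \<nu> by (intro Gamma_real_pos) (simp add: add_nonneg_pos)
  define R where "R x = indicator {0..t} x *\<^sub>R (of_real ((t - x) powr (real k * \<nu>)) * bromwich c G x)" for x
  have R_int: "integrable lborel R"
    using integral_powr_conv_bromwich(1)[OF G \<nu> c, of "real k * \<nu>" t] \<nu> unfolding R_def by simp
  have R_integral: "(LBINT x. R x) = of_real \<gamma> * bromwich c (\<lambda>s. s powr (- of_real (real k * \<nu> + 1)) * G s) t"
    using integral_powr_conv_bromwich(2)[OF G \<nu> c, of "real k * \<nu>" t] \<nu> unfolding R_def \<gamma>_def by simp
  have [measurable]: "bromwich c G \<in> borel_measurable borel"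
    using borel_measurable_bromwich[OF G \<nu> c] by simp
  have [measurable]: "f \<in> borel_measurable borel" "R \<in> borel_measurable borel"
    unfolding f_def R_def by measurable
  have f_eq_R: "AE x in lborel. of_real ((-1) ^ k / \<gamma>) * R x = f x"
    using AE_lborel_singleton[of t]
  proof eventually_elim
    case (elim x)
    show ?case
    proof (cases "x \<in> {0..t}")
      case True
      hence pow: "((t - x) powr \<nu>) ^ k = (t - x) powr (real k * \<nu>)"
        using elim by (simp add: powr_power)
      have "(- ((t - x) powr \<nu>)) ^ k = (-1) ^ k * (t - x) powr (real k * \<nu>)"
        unfolding power_minus[of "(t - x) powr \<nu>" k] pow ..
      thus ?thesis unfolding f_def R_def \<gamma>_def using True by simp
    qed (simp add: f_def R_def)
  qed
  show "integrable lborel f"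
  proof (rule integrable_cong_AE_imp[OF _ _ f_eq_R])
    show "integrable lborel (\<lambda>x. of_real ((-1) ^ k / \<gamma>) * R x)" using R_int by simp
  qed measurable
  have "(LBINT x. f x) = (LBINT x. of_real ((-1) ^ k / \<gamma>) * R x)"
    by (rule integral_cong_AE[OF _ _ f_eq_R, symmetric]) measurable
  thus "(LBINT x. f x) = (-1) ^ k * bromwich c (\<lambda>s. s powr (- of_real (real k * \<nu> + 1)) * G s) t"
    unfolding integral_mult_right_zero R_integral using \<open>0 < \<gamma>\<close> by simp
qed

lemma integral_mittag_leffler_conv_bromwich_series:
  assumes G: "bromwich_admissible \<nu> G" and \<nu>: "0 < \<nu>" and c: "0 < c" and t: "0 \<le> t"
  shows "integrable lborel
           (\<lambda>x. indicator {0..t} x *\<^sub>R (of_real (mittag_leffler \<nu> (- ((t - x) powr \<nu>))) * bromwich c G x))"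
    and "(LBINT x. indicator {0..t} x *\<^sub>R (of_real (mittag_leffler \<nu> (- ((t - x) powr \<nu>))) * bromwich c G x))
           = (\<Sum>k. (-1) ^ k * bromwich c (\<lambda>s. s powr (- of_real (real k * \<nu> + 1)) * G s) t)"
proof -
  define g where "g = bromwich c G"
  define \<gamma> where "\<gamma> k = Gamma (real k * \<nu> + 1)" for k :: nat
  have \<gamma>_pos: "0 < \<gamma> k" for k unfolding \<gamma>_def using \<nu> by (intro Gamma_real_pos) (simp add: add_nonneg_pos)
  define f where "f k x = indicator {0..t} x *\<^sub>R (of_real ((- ((t - x) powr \<nu>)) ^ k / \<gamma> k) * g x)" for k x
  have f_int: "integrable lborel (f k)" for k
    unfolding f_def[abs_def] g_def \<gamma>_def by (rule integral_mittag_leffler_term_conv_bromwich(1)[OF G \<nu> c])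
  have f_integral: "(LBINT x. f k x) = (-1) ^ k * bromwich c (\<lambda>s. s powr (- of_real (real k * \<nu> + 1)) * G s) t"
    for k
    unfolding f_def g_def \<gamma>_def by (rule integral_mittag_leffler_term_conv_bromwich(2)[OF G \<nu> c])
  have f_bound: "norm (f k x) \<le> (t powr \<nu>) ^ k / \<gamma> k * norm (f 0 x)" for k x
  proof (cases "x \<in> {0..t}")
    case True
    have "(t - x) powr \<nu> \<le> t powr \<nu>" using True \<nu> by (intro powr_mono2) auto
    hence "\<bar>(- ((t - x) powr \<nu>)) ^ k\<bar> / \<gamma> k \<le> (t powr \<nu>) ^ k / \<gamma> k"
      unfolding power_abs using \<gamma>_pos[of k] by (intro power_mono divide_right_mono) auto
    hence "\<bar>(- ((t - x) powr \<nu>)) ^ k\<bar> / \<gamma> k * norm (g x) \<le> (t powr \<nu>) ^ k / \<gamma> k * norm (g x)"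
      by (rule mult_right_mono) simp
    moreover have "norm (f j x) = \<bar>(- ((t - x) powr \<nu>)) ^ j\<bar> / \<gamma> j * norm (g x)" for j
      unfolding f_def norm_scaleR norm_mult norm_of_real using True \<gamma>_pos[of j] by simp
    moreover have "\<gamma> 0 = 1" unfolding \<gamma>_def by simp
    ultimately show ?thesis by simp
  qed (simp add: f_def)
  have f_sums: "(\<lambda>k. f k x) sums (indicator {0..t} x *\<^sub>R (of_real (mittag_leffler \<nu> (- ((t - x) powr \<nu>))) * g x))" for x
  proof -
    have "(\<lambda>k. of_real ((- ((t - x) powr \<nu>)) ^ k / \<gamma> k) * g x) sums
            (of_real (mittag_leffler \<nu> (- ((t - x) powr \<nu>))) * g x)"
      unfolding \<gamma>_def by (intro sums_mult2 sums_of_real mittag_leffler_sums \<nu>)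
    thus ?thesis unfolding f_def by (cases "x \<in> {0..t}") simp_all
  qed
  hence sum_eq: "(\<lambda>x. indicator {0..t} x *\<^sub>R (of_real (mittag_leffler \<nu> (- ((t - x) powr \<nu>))) * g x))
                   = (\<lambda>x. \<Sum>k. f k x)"
    by (auto simp: sums_iff)
  have dominated: "summable (\<lambda>k. (t powr \<nu>) ^ k / \<gamma> k)" "integrable lborel (\<lambda>x. norm (f 0 x))"
    using summable_mittag_leffler_series[OF _ \<nu>, of "t powr \<nu>"] f_int[of 0] unfolding \<gamma>_def by auto
  show "integrable lborel
          (\<lambda>x. indicator {0..t} x *\<^sub>R (of_real (mittag_leffler \<nu> (- ((t - x) powr \<nu>))) * bromwich c G x))"
    using integrable_suminf_dominated[OF f_int dominated(2,1) f_bound] unfolding sum_eq[unfolded g_def] g_def .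
  show "(LBINT x. indicator {0..t} x *\<^sub>R (of_real (mittag_leffler \<nu> (- ((t - x) powr \<nu>))) * bromwich c G x))
          = (\<Sum>k. (-1) ^ k * bromwich c (\<lambda>s. s powr (- of_real (real k * \<nu> + 1)) * G s) t)"
    using integral_suminf_dominated[OF f_int dominated(2,1) f_bound]
    unfolding sum_eq[unfolded g_def] f_integral g_def .
qed

lemma suminf_bromwich_powr_geometric:
  assumes G: "bromwich_admissible \<nu> G" and \<nu>: "0 < \<nu>" and c: "1 < c"
  shows "(\<Sum>k. (-1) ^ k * bromwich c (\<lambda>s. s powr (- of_real (real k * \<nu> + 1)) * G s) t)
           = bromwich c (\<lambda>s. G s / (s * (1 + s powr (- of_real \<nu>)))) t"
proof -
  have c0: "0 < c" using c by simp
  define e where "e y = exp (Complex c y * of_real t) * G (Complex c y)" for y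
  define h where "h k y = (-1) ^ k * (exp (Complex c y * of_real t) *
                            (Complex c y powr (- of_real (real k * \<nu> + 1)) * G (Complex c y)))" for k y
  have h_int: "integrable lborel (h k)" for k
    unfolding h_def
    by (intro integrable_mult_right integrable_bromwich_integrand[OF bromwich_admissible_mult_powr[OF G] \<nu> c0])
  have h_integral: "(-1) ^ k * bromwich c (\<lambda>s. s powr (- of_real (real k * \<nu> + 1)) * G s) t
                      = 1 / (2 * pi) * (LBINT y. h k y)" for k
    unfolding h_def bromwich_eq_LBINT[OF bromwich_admissible_mult_powr[OF G] \<nu> c0] by simp
  define q where "q = c powr (- \<nu>)"
  have q: "summable (\<lambda>k. q ^ k)" unfolding q_def using c \<nu> by (intro summable_geometric) (simp add: powr_less_one)
  have h_bound: "norm (h k y) \<le> q ^ k * norm (e y)" for k y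
  proof -
    have "c \<le> norm (Complex c y)" using complex_Re_le_cmod[of "Complex c y"] by simp
    hence "norm (Complex c y powr (- of_real (real k * \<nu> + 1))) \<le> q ^ k"
      unfolding q_def using c \<nu> by (intro norm_powr_neg_le_power) auto
    hence "norm (Complex c y powr (- of_real (real k * \<nu> + 1))) * norm (e y) \<le> q ^ k * norm (e y)"
      by (rule mult_right_mono) simp
    moreover have "norm (h k y) = norm (Complex c y powr (- of_real (real k * \<nu> + 1))) * norm (e y)"
      unfolding h_def e_def by (simp add: norm_mult norm_power)
    ultimately show ?thesis by simp
  qed
  define Gs where "Gs s = G s / (s * (1 + s powr (- of_real \<nu>)))" for s
  have h_sums: "(\<lambda>k. h k y) sums (exp (Complex c y * of_real t) * Gs (Complex c y))" for y
  proof -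
    have "1 < norm (Complex c y)" using complex_Re_le_cmod[of "Complex c y"] c by simp
    from sums_mult[OF sums_powr_geometric[OF this \<nu>], of "e y"]
    show ?thesis unfolding h_def e_def Gs_def by (simp add: mult_ac)
  qed
  hence sum_eq: "(\<lambda>y. exp (Complex c y * of_real t) * Gs (Complex c y)) = (\<lambda>y. \<Sum>k. h k y)"
    by (auto simp: sums_iff)
  have e_int: "integrable lborel (\<lambda>y. norm (e y))"
    unfolding e_def using integrable_bromwich_integrand[OF G \<nu> c0] by simp
  note dominated = h_int e_int q h_bound
  have "(\<Sum>k. (-1) ^ k * bromwich c (\<lambda>s. s powr (- of_real (real k * \<nu> + 1)) * G s) t)
          = (\<Sum>k. 1 / (2 * pi) * (LBINT y. h k y))"
    unfolding h_integral ..
  also have "\<dots> = 1 / (2 * pi) * (\<Sum>k. LBINT y. h k y)"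
    using summable_integral_dominated[OF dominated] by (rule suminf_mult)
  also have "\<dots> = bromwich c Gs t"
    unfolding bromwich_def sum_eq integral_suminf_dominated[OF dominated, symmetric]
      integral_lborel[OF integrable_suminf_dominated[OF dominated]] ..
  finally show ?thesis unfolding Gs_def .
qed

lemma integral_mittag_leffler_conv_bromwich:
  assumes G: "bromwich_admissible \<nu> G" and \<nu>: "0 < \<nu>" and c: "1 < c" and t: "0 \<le> t"
  shows "integral {0..t} (\<lambda>x. of_real (mittag_leffler \<nu> (- ((t - x) powr \<nu>))) * bromwich c G x)
           = bromwich c (\<lambda>s. G s / (s * (1 + s powr (- of_real \<nu>)))) t"
proof -
  define \<phi> where "\<phi> x = of_real (mittag_leffler \<nu> (- ((t - x) powr \<nu>))) * bromwich c G x" for x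
  have "set_integrable lborel {0..t} \<phi>"
    using integral_mittag_leffler_conv_bromwich_series(1)[OF G \<nu> _ t, of c] c
    unfolding set_integrable_def \<phi>_def by simp
  hence "integral {0..t} \<phi> = (LBINT x. indicator {0..t} x *\<^sub>R \<phi> x)"
    using set_borel_integral_eq_integral(2) unfolding set_lebesgue_integral_def by metis
  also have "\<dots> = (\<Sum>k. (-1) ^ k * bromwich c (\<lambda>s. s powr (- of_real (real k * \<nu> + 1)) * G s) t)"
    using integral_mittag_leffler_conv_bromwich_series(2)[OF G \<nu> _ t, of c] c unfolding \<phi>_def by simp
  also have "\<dots> = bromwich c (\<lambda>s. G s / (s * (1 + s powr (- of_real \<nu>)))) t"
    by (rule suminf_bromwich_powr_geometric[OF G \<nu> c])
  finally show ?thesis unfolding \<phi>_def .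
qed

lemma f_fun_rescale:
  assumes \<nu>: "0 < \<nu>" "\<nu> < 1" and a: "0 < a"
  shows "f_fun \<nu> \<rho> (x / a) = bromwich (1 / a)
           (\<lambda>s. of_real (a powr (1 - \<rho>)) * (s powr (- of_real \<rho>) * exp (- of_real (a powr \<nu>) * s powr of_real \<nu>))) x"
proof -
  define F where "F s = s powr (- of_real \<rho>) * exp (- of_real 1 * s powr of_real \<nu>)" for s :: complex
  define F\<^sub>a where "F\<^sub>a s = of_real (a powr (1 - \<rho>)) * (s powr (- of_real \<rho>) * exp (- of_real (a powr \<nu>) * s powr of_real \<nu>))"
    for s :: complex
  have F: "bromwich_admissible \<nu> F" unfolding F_def by (rule bromwich_admissible_powr_mult_exp[OF \<nu>]) simp
  have F\<^sub>a: "bromwich_admissible \<nu> F\<^sub>a"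
    unfolding F\<^sub>a_def using a by (intro bromwich_admissible_cmult bromwich_admissible_powr_mult_exp[OF \<nu>]) simp
  define h where "h y = exp (Complex 1 y * of_real (x / a)) * F (Complex 1 y)" for y
  have h_scaled: "h (0 + a * y) = exp (Complex (1 / a) y * of_real x) * F\<^sub>a (Complex (1 / a) y) / of_real a" for y
  proof -
    define s where "s = Complex (1 / a) y"
    have s_scaled: "Complex 1 (a * y) = of_real a * s" using a unfolding s_def by (simp add: Complex_eq field_simps)
    have powr_scaled: "(of_real a * s) powr of_real r = of_real (a powr r) * s powr of_real r" for r
      using a powr_times_real_left[of "of_real a" s "of_real r"] by (simp add: powr_of_real)
    have "of_real a * s * of_real (x / a) = s * of_real x" using a by (simp add: field_simps)
    hence "h (0 + a * y) = exp (s * of_real x) * F (of_real a * s)"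
      unfolding h_def add_0_left s_scaled by simp
    also have "F (of_real a * s) = of_real (a powr (- \<rho>)) * s powr (- of_real \<rho>) * exp (- (of_real (a powr \<nu>) * s powr of_real \<nu>))"
      unfolding F_def using powr_scaled[of "- \<rho>"] powr_scaled[of \<nu>] by simp
    also have "of_real (a powr (- \<rho>)) = (of_real (a powr (1 - \<rho>)) / of_real a :: complex)"
      using a by (simp add: powr_diff powr_minus_divide)
    finally show ?thesis unfolding F\<^sub>a_def s_def by (simp add: mult_ac)
  qed
  have "f_fun \<nu> \<rho> (x / a) = 1 / (2 * pi) * (LBINT y. h y)"
    unfolding f_fun_def h_def using bromwich_eq_LBINT[OF F \<nu>(1), of 1] unfolding F_def by simp
  also have "(LBINT y. h y) = a *\<^sub>R (LBINT y. h (0 + a * y))"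
    using lborel_integral_real_affine[of a h 0] a by simp
  also have "(LBINT y. h (0 + a * y)) = (LBINT y. exp (Complex (1 / a) y * of_real x) * F\<^sub>a (Complex (1 / a) y)) / of_real a"
    unfolding h_scaled by simp
  also have "1 / (2 * pi) * (a *\<^sub>R (\<dots>)) = bromwich (1 / a) F\<^sub>a x"
    using bromwich_eq_LBINT[OF F\<^sub>a \<nu>(1), of "1 / a" x] a by (simp add: scaleR_conv_of_real)
  finally show ?thesis unfolding F\<^sub>a_def .
qed

lemma integral_mittag_leffler_conv_f_fun:
  assumes \<nu>: "0 < \<nu>" "\<nu> < 1" and lam: "0 < lam" and t: "0 \<le> t"
  shows "integral {0..t} (\<lambda>x. of_real (mittag_leffler \<nu> (- ((t - x) powr \<nu>)))
                               * f_fun \<nu> (\<nu> + \<mu> - 1) (x / lam powr (1 / \<nu>)))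
           = of_real (lam powr ((2 - \<nu> - \<mu>) / \<nu>)) *
             bromwich 1 (\<lambda>s. s powr (- of_real \<mu>) * exp (- of_real lam * s powr of_real \<nu>) / (1 + s powr of_real \<nu>)) t"
proof -
  define a where "a = lam powr (1 / \<nu>)"
  \<comment> \<open>Rescaling produces the abscissa \<open>1 / a\<close>; the series in \<open>s\<^sup>-\<^sup>\<nu>\<close> needs \<open>norm s > 1\<close>.\<close>
  define c where "c = 1 + 1 / a"
  define A where "A = a powr (1 - (\<nu> + \<mu> - 1))"
  define G where "G s = of_real A * (s powr (- of_real (\<nu> + \<mu> - 1)) * exp (- of_real lam * s powr of_real \<nu>))"
    for s :: complex
  define H where "H s = s powr (- of_real \<mu>) * exp (- of_real lam * s powr of_real \<nu>) / (1 + s powr of_real \<nu>)"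
    for s :: complex
  have a: "0 < a" "a powr \<nu> = lam" unfolding a_def using \<nu> lam by (simp_all add: powr_powr)
  have c: "1 < c" "1 / a \<le> c" unfolding c_def using a by simp_all
  have G: "bromwich_admissible \<nu> G"
    unfolding G_def using \<nu> lam by (intro bromwich_admissible_cmult bromwich_admissible_powr_mult_exp) auto
  have H: "bromwich_admissible \<nu> H"
    unfolding H_def using \<nu> lam
    by (intro bromwich_admissible_divide_one_plus_powr bromwich_admissible_powr_mult_exp) auto
  have "f_fun \<nu> (\<nu> + \<mu> - 1) (x / a) = bromwich c G x" for x
    using f_fun_rescale[OF \<nu> a(1), of "\<nu> + \<mu> - 1" x] bromwich_abscissa_independent[OF G \<nu>(1) _ c(2)] a
    unfolding G_def A_def by simp
  hence "integral {0..t} (\<lambda>x. of_real (mittag_leffler \<nu> (- ((t - x) powr \<nu>))) * f_fun \<nu> (\<nu> + \<mu> - 1) (x / a))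
           = bromwich c (\<lambda>s. G s / (s * (1 + s powr (- of_real \<nu>)))) t"
    using integral_mittag_leffler_conv_bromwich[OF G \<nu>(1) c(1) t] by simp
  also have "\<dots> = bromwich c (\<lambda>s. of_real A * H s) t"
    unfolding G_def H_def using c \<nu> by (intro bromwich_cong powr_mult_div_one_plus_powr_neg) auto
  also have "\<dots> = of_real A * bromwich 1 H t"
    using bromwich_cmult[OF H \<nu>(1)] bromwich_abscissa_independent[OF H \<nu>(1) zero_less_one, of c t] c
    by simp
  also have "A = lam powr ((2 - \<nu> - \<mu>) / \<nu>)"
    unfolding A_def a_def using lam by (simp add: powr_powr field_simps)
  finally show ?thesis unfolding a_def H_def .
qed

section \<open>The left-hand side\<close>

lemma integral_exp_tail_mult_exp:
  fixes w :: complex and lam :: real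
  assumes w: "0 \<le> Re w"
  shows "integrable lborel (\<lambda>u. indicator {lam..} u *\<^sub>R (of_real (exp (- (u - lam))) * exp (- of_real u * w)))"
    and "(LBINT u. indicator {lam..} u *\<^sub>R (of_real (exp (- (u - lam))) * exp (- of_real u * w)))
           = exp (- of_real lam * w) / (1 + w)"
proof -
  define v where "v = 1 + w"
  have v: "0 < Re v" using w by (simp add: v_def)
  define L where "L x = indicator {0..} x *\<^sub>R (of_real (x powr 0) * exp (- v * of_real x))" for x :: real
  define L\<^sub>0 where "L\<^sub>0 x = indicator {0..} x *\<^sub>R exp (- v * of_real x)" for x :: real
  have [measurable]: "L \<in> borel_measurable borel" "L\<^sub>0 \<in> borel_measurable borel"
    unfolding L_def L\<^sub>0_def by measurable
  \<comment> \<open>\<open>L\<close> and \<open>L\<^sub>0\<close> differ at 0, where \<open>0 powr 0 = 0\<close>.\<close>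
  have L_eq: "AE x in lborel. L x = L\<^sub>0 x"
    using AE_lborel_singleton[of 0] by eventually_elim (auto simp: L_def L\<^sub>0_def indicator_def)
  have "integrable lborel L" unfolding L_def using laplace_powr(1)[of 0 v] v by simp
  hence L\<^sub>0_int: "integrable lborel L\<^sub>0" by (rule integrable_cong_AE_imp[OF _ _ L_eq]) measurable
  have "(LBINT x. L\<^sub>0 x) = (LBINT x. L x)" using L_eq by (intro integral_cong_AE[symmetric]) auto
  also have "\<dots> = 1 / v"
    unfolding L_def using laplace_powr(2)[of 0 v] v by (simp add: powr_minus divide_inverse)
  finally have L\<^sub>0_integral: "(LBINT x. L\<^sub>0 x) = 1 / v" .
  define f where "f u = indicator {lam..} u *\<^sub>R (of_real (exp (- (u - lam))) * exp (- of_real u * w))" for u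
  have f_shift: "f (lam + 1 * x) = exp (- of_real lam * w) * L\<^sub>0 x" for x
    unfolding f_def L\<^sub>0_def v_def
    by (cases "x \<ge> 0") (simp_all add: algebra_simps exp_add[symmetric] flip: exp_of_real)
  show "integrable lborel f"
    using lborel_integrable_real_affine_iff[of 1 f lam] L\<^sub>0_int unfolding f_shift by simp
  show "(LBINT u. f u) = exp (- of_real lam * w) / (1 + w)"
    using lborel_integral_real_affine[of 1 f lam] L\<^sub>0_integral unfolding f_shift v_def by simp
qed

lemma norm_powr_mult_exp_neg_powr_le:
  assumes \<nu>: "0 < \<nu>" "\<nu> < 1" and \<mu>: "0 \<le> \<mu>" and u: "0 < lam" "lam \<le> u"
  shows "norm (Complex 1 y powr (- of_real \<mu>) * exp (- of_real u * Complex 1 y powr of_real \<nu>))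
           \<le> exp (- (lam * cos (pi * \<nu> / 2)) * \<bar>y\<bar> powr \<nu>)"
proof -
  define s where "s = Complex 1 y"
  define \<kappa> where "\<kappa> = cos (pi * \<nu> / 2)"
  have \<kappa>: "0 < \<kappa>" unfolding \<kappa>_def using \<nu> by (rule cos_half_pi_mult_pos)
  have Res: "0 < Re s" and ns: "1 \<le> norm s" and ny: "\<bar>y\<bar> powr \<nu> \<le> norm s powr \<nu>"
    using complex_Re_le_cmod[of s] abs_Im_le_cmod[of s] \<nu> by (auto simp: s_def intro: powr_mono2)
  have powr_le: "norm (s powr (- of_real \<mu>)) \<le> 1"
    using ns \<mu> powr_mono2'[of "- \<mu>" 1 "norm s"] by (simp add: norm_powr_real_powr')
  have "lam * \<kappa> * \<bar>y\<bar> powr \<nu> \<le> u * \<kappa> * norm s powr \<nu>"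
    using u \<kappa> ny by (intro mult_mono) auto
  hence decay: "exp (- u * \<kappa> * norm s powr \<nu>) \<le> exp (- (lam * \<kappa>) * \<bar>y\<bar> powr \<nu>)" by simp
  have "norm (exp (- of_real u * s powr of_real \<nu>)) \<le> exp (- u * \<kappa> * norm s powr \<nu>)"
    unfolding \<kappa>_def by (rule norm_exp_neg_mult_powr_le[OF Res \<nu>(1)]) (use \<nu> u in auto)
  hence exp_le: "norm (exp (- of_real u * s powr of_real \<nu>)) \<le> exp (- (lam * \<kappa>) * \<bar>y\<bar> powr \<nu>)"
    using decay by (rule order.trans)
  have "norm (s powr (- of_real \<mu>) * exp (- of_real u * s powr of_real \<nu>)) \<le> 1 * exp (- (lam * \<kappa>) * \<bar>y\<bar> powr \<nu>)"
    unfolding norm_mult using powr_le exp_le by (rule mult_mono) simp_all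
  thus ?thesis unfolding s_def \<kappa>_def by simp
qed

lemma integrable_exp_tail_mult_K_kernel:
  assumes \<nu>: "0 < \<nu>" "\<nu> < 1" and \<mu>: "0 \<le> \<mu>" and lam: "0 < lam"
  shows "integrable (lborel \<Otimes>\<^sub>M lborel) (\<lambda>(u, y). indicator {lam..} u *\<^sub>R (of_real (exp (- (u - lam))) *
           (exp (Complex 1 y * of_real t) *
            (Complex 1 y powr (- of_real \<mu>) * exp (- of_real u * Complex 1 y powr of_real \<nu>)))))"
    (is "integrable _ ?m")
proof (rule Bochner_Integration.integrable_bound)
  define \<kappa> where "\<kappa> = cos (pi * \<nu> / 2)"
  have \<kappa>: "0 < \<kappa>" unfolding \<kappa>_def using \<nu> by (rule cos_half_pi_mult_pos)
  have [measurable]: "(\<lambda>p::real \<times> real. Complex 1 (snd p) powr a) \<in> borel_measurable (lborel \<Otimes>\<^sub>M lborel)"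
    for a
    using borel_measurable_continuous_onI[OF continuous_on_Complex_line_powr[of 1 a]]
    by (intro measurable_compose[OF measurable_snd]) simp_all
  show "?m \<in> borel_measurable (lborel \<Otimes>\<^sub>M lborel)" unfolding case_prod_beta Complex_eq by measurable
  define D where "D = (\<lambda>(u, y). indicator {lam..} u * exp (- (u - lam)) * (exp t * exp (- (lam * \<kappa>) * \<bar>y\<bar> powr \<nu>)))"
  have "integrable lborel (\<lambda>y. exp t * exp (- (lam * \<kappa>) * \<bar>y\<bar> powr \<nu>))"
    using integrable_exp_neg_mult_abs_powr[of "lam * \<kappa>" \<nu>] lam \<kappa> \<nu> by simp
  with integrable_exp_neg_diff show "integrable (lborel \<Otimes>\<^sub>M lborel) D"
    unfolding D_def by (rule integrable_lborel_pair_mult)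
  show "AE p in lborel \<Otimes>\<^sub>M lborel. norm (?m p) \<le> norm (D p)"
  proof (rule AE_I2)
    fix p :: "real \<times> real"
    show "norm (?m p) \<le> norm (D p)"
    proof (cases p)
      case (Pair u y)
      thus ?thesis
        using norm_powr_mult_exp_neg_powr_le[OF \<nu> \<mu> lam, of u y] unfolding D_def \<kappa>_def
        by (cases "lam \<le> u") (simp_all add: norm_mult mult_left_mono)
    qed
  qed
qed

lemma has_integral_exp_tail_mult_K_fun:
  assumes \<nu>: "0 < \<nu>" "\<nu> < 1" and \<mu>: "0 \<le> \<mu>" and lam: "0 < lam"
  shows "((\<lambda>u. of_real (exp (- (u - lam))) * K_fun \<nu> \<mu> t u) has_integral
           bromwich 1 (\<lambda>s. s powr (- of_real \<mu>) * exp (- of_real lam * s powr of_real \<nu>) / (1 + s powr of_real \<nu>)) t)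
         {lam..}"
proof -
  define H where "H s = s powr (- of_real \<mu>) * exp (- of_real lam * s powr of_real \<nu>) / (1 + s powr of_real \<nu>)"
    for s :: complex
  define K where "K u s = s powr (- of_real \<mu>) * exp (- of_real u * s powr of_real \<nu>)" for u :: real and s :: complex
  define m where "m = (\<lambda>(u, y). indicator {lam..} u *\<^sub>R (of_real (exp (- (u - lam))) *
                         (exp (Complex 1 y * of_real t) * K u (Complex 1 y))))"
  have H: "bromwich_admissible \<nu> H"
    unfolding H_def using \<nu> lam
    by (intro bromwich_admissible_divide_one_plus_powr bromwich_admissible_powr_mult_exp) auto
  have m_int: "integrable (lborel \<Otimes>\<^sub>M lborel) m"
    unfolding m_def K_def by (rule integrable_exp_tail_mult_K_kernel[OF assms])
  have inner_y: "indicator {lam..} u *\<^sub>R (of_real (exp (- (u - lam))) * K_fun \<nu> \<mu> t u)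
                   = 1 / (2 * pi) * (LBINT y. m (u, y))" for u
  proof (cases "u \<ge> lam")
    case True
    have "bromwich_admissible \<nu> (K u)"
      unfolding K_def using True lam \<nu> by (intro bromwich_admissible_powr_mult_exp) auto
    moreover have "K_fun \<nu> \<mu> t u = bromwich 1 (K u) t" unfolding K_fun_def K_def ..
    ultimately show ?thesis
      unfolding m_def using True bromwich_eq_LBINT[of \<nu> "K u" 1 t] \<nu> by simp
  qed (simp add: m_def)
  have inner_u: "(LBINT u. m (u, y)) = exp (Complex 1 y * of_real t) * H (Complex 1 y)" for y
  proof -
    define s where "s = Complex 1 y"
    have "0 \<le> Re (s powr of_real \<nu>)" using \<nu> by (intro Re_powr_nonneg) (auto simp: s_def)
    note tail = integral_exp_tail_mult_exp(2)[OF this, of lam]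
    have "(LBINT u. m (u, y)) = (LBINT u. (exp (s * of_real t) * s powr (- of_real \<mu>)) *
            (indicator {lam..} u *\<^sub>R (of_real (exp (- (u - lam))) * exp (- of_real u * s powr of_real \<nu>))))"
      unfolding m_def K_def s_def by (simp add: mult_ac)
    also have "\<dots> = (exp (s * of_real t) * s powr (- of_real \<mu>)) * (exp (- of_real lam * s powr of_real \<nu>) / (1 + s powr of_real \<nu>))"
      unfolding integral_mult_right_zero tail ..
    finally show ?thesis unfolding H_def s_def by (simp add: mult_ac)
  qed
  define \<phi> where "\<phi> u = of_real (exp (- (u - lam))) * K_fun \<nu> \<mu> t u" for u
  have "set_integrable lborel {lam..} \<phi>"
    unfolding set_integrable_def \<phi>_def inner_y using lborel_pair.integrable_fst'[OF m_int] by simp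
  moreover have "(LBINT u. indicator {lam..} u *\<^sub>R \<phi> u) = bromwich 1 H t"
  proof -
    have "(LBINT u. indicator {lam..} u *\<^sub>R \<phi> u) = 1 / (2 * pi) * (LBINT u. LBINT y. m (u, y))"
      unfolding \<phi>_def inner_y by simp
    also have "(LBINT u. LBINT y. m (u, y)) = (LBINT y. LBINT u. m (u, y))"
      using lborel_pair.Fubini_integral[of "\<lambda>u y. m (u, y)", unfolded case_prod_eta, OF m_int] by simp
    finally show ?thesis unfolding inner_u bromwich_eq_LBINT[OF H \<nu>(1) zero_less_one] .
  qed
  ultimately show ?thesis
    unfolding H_def[symmetric] \<phi>_def[symmetric]
    by (metis set_borel_integral_eq_integral set_lebesgue_integral_def has_integral_integral)
qed

theorem mainTheorem10:
  fixes \<nu> \<mu> lam t :: real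
  assumes "0 < \<nu>" "\<nu> < 1" "0 \<le> \<mu>" "\<mu> < 1" "0 < lam" "0 < t"
  shows "((\<lambda>u. exp (- (u - lam)) * K_fun \<nu> \<mu> t u) has_integral
           of_real (lam powr ((\<nu> + \<mu> - 2) / \<nu>)) *
           integral {0..t} (\<lambda>x. of_real (mittag_leffler \<nu> (- ((t - x) powr \<nu>)))
                                 * f_fun \<nu> (\<nu> + \<mu> - 1) (x / lam powr (1 / \<nu>)))) {lam..}"
proof -
  define H where "H s = s powr (- of_real \<mu>) * exp (- of_real lam * s powr of_real \<nu>) / (1 + s powr of_real \<nu>)"
    for s :: complex
  have "lam powr ((\<nu> + \<mu> - 2) / \<nu>) * lam powr ((2 - \<nu> - \<mu>) / \<nu>) = 1"
    using assms by (simp add: powr_add[symmetric] field_simps)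
  hence "of_real (lam powr ((\<nu> + \<mu> - 2) / \<nu>)) *
           integral {0..t} (\<lambda>x. of_real (mittag_leffler \<nu> (- ((t - x) powr \<nu>)))
                                 * f_fun \<nu> (\<nu> + \<mu> - 1) (x / lam powr (1 / \<nu>))) = bromwich 1 H t"
    using integral_mittag_leffler_conv_f_fun[of \<nu> lam t \<mu>] assms unfolding H_def
    by (simp add: mult.assoc[symmetric] flip: of_real_mult)
  with has_integral_exp_tail_mult_K_fun[OF assms(1-3,5), of t, folded H_def] show ?thesis by simp
qed

end
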